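(* Let $r\in(0,1/2)$. Consider the repetition-coding distributed delay diversity scheme described in the context, with deterministic delays whose relative delay $T_0=|\tau_2-\tau_1|$ satisfies $T_0B_w\ge1$. Put $\Delta_1=\lfloor T_0B_w\rfloor/\lceil T_0B_w\rceil\in[1/2,1]$. Then $$3-\frac{6r}{\Delta_1}\le\liminf_{\mathrm{SNR}\to\infty}-\frac{\log\Pr[I_{R\text{-}TDA}<R]}{\log\mathrm{SNR}}\le\limsup_{\mathrm{SNR}\to\infty}-\frac{\log\Pr[I_{R\text{-}TDA}<R]}{\log\mathrm{SNR}}\le 3-6r.$$ In particular, if $T_0B_w$ is a positive integer, the diversity–multiplexing tradeoff exists and equals $d_{R\text{-}TDA}(r)=3-6r$.
   Context: Network: a source $N_S$, two relays $N_{R_1},N_{R_2}$ and a destination $N_D$. The gains $\alpha_{i,j}$, $i\in\{S,R_1,R_2\}$, $j\in\{R_1,R_2,D\}$, $i\neq j$, are mutually independent zero-mean circularly symmetric complex Gaussian random variables with variances $\sigma^2_{i,j}>0$. For $\mathrm{SNR}>0$ set $\rho_0=\frac23\mathrm{SNR}$. The target rate is $R=r\log(1+\mathrm{SNR}\,\sigma^2_{S,D})$. Relay $R_k$ belongs to the decoding set $\mathcal D(s)$ iff $\frac12\log(1+\rho_0|\alpha_{S,R_k}|^2)\ge R$. Repetition-coding distributed delay diversity: successful relays retransmit the source's own codeword in phase 2, with bandwidth $B_w>0$ and delays $\tau_k$ at the destination. Conditioned on $\mathcal D(s)$, $$I_{R\text{-}TDA}=\frac{1}{2B_w}\int_{-B_w/2}^{B_w/2}\log\left(1+\rho_0|\alpha_{S,D}|^2+\rho_0\Big|\sum_{R_k\in\mathcal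 D(s)}\alpha_{R_k,D}e^{j2\pi f\tau_k}\Big|^2\right)df,$$ where an empty sum equals $0$. The probability $\Pr[I_{R\text{-}TDA}<R]$ averages over the gains, including the randomness of $\mathcal D(s)$. *)

theory Defs
  imports "HOL-Probability.Probability"
begin

datatype relay = R1 | R2

datatype link = SR1 | SR2 | SD | R1R2 | R2R1 | R1D | R2D

lemma UNIV_link: "(UNIV :: link set) = {SR1, SR2, SD, R1R2, R2R1, R1D, R2D}"
  by (auto intro: link.exhaust)

instance link :: finite
  by standard (simp add: UNIV_link)

definition src_relay :: "relay \<Rightarrow> link" where
  "src_relay k = (case k of R1 \<Rightarrow> SR1 | R2 \<Rightarrow> SR2)"

definition relay_dst :: "relay \<Rightarrow> link" where
  "relay_dst k = (case k of R1 \<Rightarrow> R1D | R2 \<Rightarrow> R2D)"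

definition cgauss_density :: "real \<Rightarrow> complex \<Rightarrow> real" where
  "cgauss_density s z = exp (- (cmod z)\<^sup>2 / s) / (pi * s)"

definition cgauss :: "real \<Rightarrow> complex measure" where
  "cgauss s = density lborel (\<lambda>z. ennreal (cgauss_density s z))"

definition gain_measure :: "(link \<Rightarrow> real) \<Rightarrow> (link \<Rightarrow> complex) measure" where
  "gain_measure \<sigma>2 = PiM UNIV (\<lambda>l. cgauss (\<sigma>2 l))"

definition rho0 :: "real \<Rightarrow> real" where
  "rho0 snr = 2 / 3 * snr"

text \<open>Target rate R = r log(1 + SNR sigma_{S,D}^2) (natural log throughout).\<close>
definition target_rate :: "real \<Rightarrow> (link \<Rightarrow> real) \<Rightarrow> real \<Rightarrow> real" where
  "target_rate r \<sigma>2 snr = r * ln (1 + snr * \<sigma>2 SD)"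

definition decoding_set ::
  "real \<Rightarrow> (link \<Rightarrow> real) \<Rightarrow> real \<Rightarrow> (link \<Rightarrow> complex) \<Rightarrow> relay set" where
  "decoding_set r \<sigma>2 snr \<alpha> =
     {k. ln (1 + rho0 snr * (cmod (\<alpha> (src_relay k)))\<^sup>2) / 2 \<ge> target_rate r \<sigma>2 snr}"

definition I_RTDA ::
  "real \<Rightarrow> (link \<Rightarrow> real) \<Rightarrow> real \<Rightarrow> (relay \<Rightarrow> real) \<Rightarrow> real \<Rightarrow> (link \<Rightarrow> complex) \<Rightarrow> real" where
  "I_RTDA r \<sigma>2 Bw \<tau> snr \<alpha> =
     1 / (2 * Bw) * integral {- Bw / 2 .. Bw / 2}
       (\<lambda>f. ln (1 + rho0 snr * (cmod (\<alpha> SD))\<^sup>2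
                 + rho0 snr * (cmod (\<Sum>k\<in>decoding_set r \<sigma>2 snr \<alpha>.
                        \<alpha> (relay_dst k) * cis (2 * pi * f * \<tau> k)))\<^sup>2))"

definition outage_prob ::
  "real \<Rightarrow> (link \<Rightarrow> real) \<Rightarrow> real \<Rightarrow> (relay \<Rightarrow> real) \<Rightarrow> real \<Rightarrow> real" where
  "outage_prob r \<sigma>2 Bw \<tau> snr =
     measure (gain_measure \<sigma>2)
       {\<alpha> \<in> space (gain_measure \<sigma>2). I_RTDA r \<sigma>2 Bw \<tau> snr \<alpha> < target_rate r \<sigma>2 snr}"

end

theory Submission
  imports Defs
begin

text \<open>
  Write \<open>P(snr)\<close> for the outage probability and \<open>\<rho> = rho0 snr\<close>.
  We show that \<open>-ln P(snr) / ln snr \<longrightarrow> 3 - 6r\<close> for every relative delay with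
  \<open>T0 Bw \<ge> 1\<close>, which is stronger than the stated bounds, since \<open>\<Delta>1 \<le> 1\<close>.

  Lower bound on \<open>P\<close>: if the direct and both relay-destination gains are all
  at most \<open>e \<approx> snr^(2r-1)\<close> in squared modulus, the mutual information is at most
  \<open>ln (1 + 5 \<rho> e) / 2 < R\<close> whatever the decoding set is; these three independent
  complex Gaussian events have probability of order \<open>e^3\<close>.

  Upper bound on \<open>P\<close>: the integrand over the band is bounded below by a constant,
  except near the frequency nulls of the two-tap channel
  \<open>h1 e^(2\<pi> i f t1) + h2 e^(2\<pi> i f t2)\<close>; since \<open>T0 Bw \<ge> 1\<close>, the null windows of
  angular half-width \<open>\<eta>\<close> cover at most the fraction \<open>3\<eta>/\<pi>\<close> of the band.
  Hence outage forces, for every decoding set, the direct gain and two further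
  gains below a threshold \<open>T \<approx> snr^(2r/(1-3\<eta>/\<pi>) - 1)\<close>, an event of probability
  of order \<open>T^3\<close>.  Letting \<open>\<eta> \<rightarrow> 0\<close> gives the matching exponent.
\<close>

subsection \<open>The circularly symmetric complex Gaussian law\<close>

lemma cgauss_density_eq_normal_prod:
  assumes "s > 0"
  shows "cgauss_density s z = (\<Prod>b\<in>Basis. normal_density 0 (sqrt (s/2)) (z \<bullet> b))"
proof -
  have B: "(Basis :: complex set) = {1, \<i>}" by (simp add: Basis_complex_def)
  have "(\<Prod>b\<in>Basis. normal_density 0 (sqrt (s/2)) (z \<bullet> b))
      = normal_density 0 (sqrt (s/2)) (Re z) * normal_density 0 (sqrt (s/2)) (Im z)"
    by (simp add: B inner_complex_def)
  also have "\<dots> = cgauss_density s z"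
    using assms
    by (simp add: normal_density_def cgauss_density_def cmod_power2 exp_add[symmetric]
        real_sqrt_mult[symmetric] add_divide_distrib field_simps)
  finally show ?thesis ..
qed

lemma sets_cgauss[simp]: "sets (cgauss s) = sets borel"
  by (simp add: cgauss_def)

lemma space_cgauss[simp]: "space (cgauss s) = UNIV"
  by (simp add: cgauss_def)

lemma borel_measurable_cgauss_density[measurable]: "cgauss_density s \<in> borel_measurable borel"
  unfolding cgauss_density_def by measurable

lemma emeasure_cgauss:
  "A \<in> sets borel \<Longrightarrow>
    emeasure (cgauss s) A = (\<integral>\<^sup>+z. ennreal (cgauss_density s z) * indicator A z \<partial>lborel)"
  unfolding cgauss_def by (subst emeasure_density) auto

lemma prob_space_cgauss:
  assumes "s > 0"
  shows "prob_space (cgauss s)"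
proof
  have "emeasure (cgauss s) (space (cgauss s)) = (\<integral>\<^sup>+z. ennreal (cgauss_density s z) \<partial>lborel)"
    by (simp add: emeasure_cgauss)
  also have "\<dots> = (\<integral>\<^sup>+(z::complex). (\<Prod>b\<in>Basis. ennreal (normal_density 0 (sqrt (s/2)) (z \<bullet> b))) \<partial>lborel)"
    by (simp add: cgauss_density_eq_normal_prod[OF assms] prod_ennreal[symmetric])
  also have "\<dots> = (\<Prod>b\<in>(Basis::complex set). (\<integral>\<^sup>+x. ennreal (normal_density 0 (sqrt (s/2)) x) \<partial>lborel))"
    by (rule nn_integral_lborel_prod) auto
  also have "\<dots> = 1"
  proof -
    have "(\<integral>\<^sup>+x. ennreal (normal_density 0 (sqrt (s/2)) x) \<partial>lborel) = 1"
      using assms by (subst nn_integral_eq_integral) auto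
    then show ?thesis by simp
  qed
  finally show "emeasure (cgauss s) (space (cgauss s)) = 1" .
qed

text \<open>Small-ball lower bound: the open square \<open>(-a,a)\<^sup>2\<close> has probability at least
  its area times the minimum of the density on it.\<close>
lemma cgauss_square_lower:
  assumes "s > 0" "a > 0"
  shows "ennreal (4 * a\<^sup>2 * exp (- 2 * a\<^sup>2 / s) / (pi * s))
    \<le> emeasure (cgauss s) (box (Complex (-a) (-a)) (Complex a a))"
proof -
  let ?Q = "box (Complex (-a) (-a)) (Complex a a)"
  let ?c = "exp (- 2 * a\<^sup>2 / s) / (pi * s)"
  have area: "emeasure lborel ?Q = ennreal (4 * a\<^sup>2)"
    using assms by (subst emeasure_lborel_box)
      (auto simp: Basis_complex_def inner_complex_def power2_eq_square)
  have dens: "?c \<le> cgauss_density s z" if "z \<in> ?Q" for z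
  proof -
    have "\<bar>Re z\<bar> < a" "\<bar>Im z\<bar> < a"
      using that by (auto simp: box_def Basis_complex_def inner_complex_def)
    then have "(Re z)\<^sup>2 < a\<^sup>2" "(Im z)\<^sup>2 < a\<^sup>2"
      by (simp_all add: abs_less_iff power2_eq_square)
        (metis abs_less_iff abs_mult_less abs_mult_self_eq)+
    then have "(cmod z)\<^sup>2 \<le> 2 * a\<^sup>2" by (simp add: cmod_power2)
    then have "- 2 * a\<^sup>2 / s \<le> - (cmod z)\<^sup>2 / s" using assms by (simp add: divide_right_mono)
    then show ?thesis unfolding cgauss_density_def using assms by (simp add: divide_right_mono)
  qed
  have "ennreal (4 * a\<^sup>2 * ?c) = ennreal ?c * emeasure lborel ?Q"
    using area assms by (simp add: ennreal_mult'[symmetric] mult.commute)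
  also have "\<dots> = (\<integral>\<^sup>+z. ennreal ?c * indicator ?Q z \<partial>lborel)"
    by (simp add: nn_integral_cmult_indicator)
  also have "\<dots> \<le> (\<integral>\<^sup>+z. ennreal (cgauss_density s z) * indicator ?Q z \<partial>lborel)"
    using dens by (intro nn_integral_mono) (auto simp: indicator_def intro!: ennreal_leI)
  also have "\<dots> = emeasure (cgauss s) ?Q" by (simp add: emeasure_cgauss)
  finally show ?thesis by (simp add: mult.assoc)
qed

text \<open>Small-ball upper bound: the density is at most \<open>1/(\<pi> s)\<close> and the disk
  \<open>|z|\<^sup>2 < T\<close> lies in a square of area \<open>4T\<close>.\<close>
lemma cgauss_disk_upper:
  assumes "s > 0" "T \<ge> 0"
  shows "emeasure (cgauss s) {z. (cmod z)\<^sup>2 < T} \<le> ennreal (4 * T / (pi * s))"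
proof -
  let ?a = "sqrt T"
  let ?Q = "box (Complex (-?a) (-?a)) (Complex ?a ?a)"
  let ?D = "{z. (cmod z)\<^sup>2 < T}"
  have area: "emeasure lborel ?Q = ennreal (4 * T)"
    using assms by (subst emeasure_lborel_box) (auto simp: Basis_complex_def inner_complex_def)
  have sub: "?D \<subseteq> ?Q"
  proof
    fix z assume "z \<in> ?D"
    then have "(Re z)\<^sup>2 < T" "(Im z)\<^sup>2 < T"
      by (auto simp: cmod_power2 add_pos_nonneg) (smt (verit) zero_le_power2)+
    then have "\<bar>Re z\<bar> < ?a" "\<bar>Im z\<bar> < ?a" by (auto intro: real_less_rsqrt)
    then show "z \<in> ?Q" by (auto simp: box_def Basis_complex_def inner_complex_def)
  qed
  have dens: "cgauss_density s z \<le> 1 / (pi * s)" for z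
    unfolding cgauss_density_def using assms by (simp add: divide_right_mono)
  have "?D \<in> sets borel" by measurable
  then have "emeasure (cgauss s) ?D = (\<integral>\<^sup>+z. ennreal (cgauss_density s z) * indicator ?D z \<partial>lborel)"
    by (simp add: emeasure_cgauss)
  also have "\<dots> \<le> (\<integral>\<^sup>+z. ennreal (1 / (pi * s)) * indicator ?Q z \<partial>lborel)"
    using sub dens by (intro nn_integral_mono) (auto simp: indicator_def intro!: ennreal_leI)
  also have "\<dots> = ennreal (1 / (pi * s)) * emeasure lborel ?Q"
    by (simp add: nn_integral_cmult_indicator)
  also have "\<dots> = ennreal (4 * T / (pi * s))"
    using area assms by (simp add: ennreal_mult[symmetric])
  finally show ?thesis .
qed

text \<open>The links form a countable type, as needed to identify the product
  \<open>\<sigma>\<close>-algebra with the Borel algebra.\<close>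
instance link :: countable
  by (rule countable_classI[of "\<lambda>l. case l of SR1 \<Rightarrow> 0 | SR2 \<Rightarrow> 1 | SD \<Rightarrow> 2
      | R1R2 \<Rightarrow> 3 | R2R1 \<Rightarrow> 4 | R1D \<Rightarrow> 5 | R2D \<Rightarrow> (6::nat)"]) (auto split: link.splits)

lemma space_gain_measure[simp]: "space (gain_measure \<sigma>2) = UNIV"
  by (simp add: gain_measure_def space_PiM)

lemma sets_gain_measure: "sets (gain_measure \<sigma>2) = sets (borel :: (link \<Rightarrow> complex) measure)"
proof -
  have "sets (gain_measure \<sigma>2) = sets (PiM UNIV (\<lambda>l::link. borel :: complex measure))"
    unfolding gain_measure_def by (rule sets_PiM_cong) auto
  also have "\<dots> = sets borel" by (rule sets_PiM_equal_borel)
  finally show ?thesis .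
qed

lemma prob_space_gain_measure: "(\<And>l. \<sigma>2 l > 0) \<Longrightarrow> prob_space (gain_measure \<sigma>2)"
  unfolding gain_measure_def by (rule prob_space_PiM) (auto intro: prob_space_cgauss)

lemma gain_cylinder_eq_prod_emb:
  "{\<alpha>. \<forall>l\<in>J. \<alpha> l \<in> A l} = prod_emb UNIV (\<lambda>l. cgauss (\<sigma>2 l)) J (Pi\<^sub>E J A)"
  by (auto simp: prod_emb_def space_PiM PiE_iff)

lemma emeasure_gain_cylinder:
  assumes "\<And>l. \<sigma>2 l > 0" "\<And>l. l \<in> J \<Longrightarrow> A l \<in> sets borel"
  shows "emeasure (gain_measure \<sigma>2) {\<alpha>. \<forall>l\<in>J. \<alpha> l \<in> A l}
       = (\<Prod>l\<in>J. emeasure (cgauss (\<sigma>2 l)) (A l))"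
  unfolding gain_measure_def gain_cylinder_eq_prod_emb[of J A \<sigma>2] using assms
  by (simp add: emeasure_PiM_emb prob_space_cgauss)

lemma gain_cylinder_sets:
  assumes "\<And>l. l \<in> J \<Longrightarrow> A l \<in> sets borel"
  shows "{\<alpha>. \<forall>l\<in>J. \<alpha> l \<in> A l} \<in> sets (gain_measure \<sigma>2)"
  unfolding gain_measure_def gain_cylinder_eq_prod_emb[of J A \<sigma>2] using assms
  by (auto intro!: sets_PiM_I)

lemma measure_gain_cylinder_le:
  assumes "\<And>l. \<sigma>2 l > 0" "\<And>l. l \<in> J \<Longrightarrow> A l \<in> sets borel"
    and "\<And>l. l \<in> J \<Longrightarrow> emeasure (cgauss (\<sigma>2 l)) (A l) \<le> ennreal (b l)"
    and "\<And>l. l \<in> J \<Longrightarrow> b l \<ge> 0"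
  shows "measure (gain_measure \<sigma>2) {\<alpha>. \<forall>l\<in>J. \<alpha> l \<in> A l} \<le> (\<Prod>l\<in>J. b l)"
proof -
  interpret prob_space "gain_measure \<sigma>2" using prob_space_gain_measure assms(1) .
  have "ennreal (measure (gain_measure \<sigma>2) {\<alpha>. \<forall>l\<in>J. \<alpha> l \<in> A l})
      = (\<Prod>l\<in>J. emeasure (cgauss (\<sigma>2 l)) (A l))"
    using emeasure_gain_cylinder[of \<sigma>2 J A] assms by (simp add: emeasure_eq_measure)
  also have "\<dots> \<le> (\<Prod>l\<in>J. ennreal (b l))"
    using assms by (intro prod_mono_ennreal) auto
  also have "\<dots> = ennreal (\<Prod>l\<in>J. b l)" using assms by (simp add: prod_ennreal)
  finally show ?thesis using assms by (simp add: ennreal_le_iff prod_nonneg)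
qed

lemma measure_gain_cylinder_ge:
  assumes "\<And>l. \<sigma>2 l > 0" "\<And>l. l \<in> J \<Longrightarrow> A l \<in> sets borel"
    and "\<And>l. l \<in> J \<Longrightarrow> ennreal (b l) \<le> emeasure (cgauss (\<sigma>2 l)) (A l)"
    and "\<And>l. l \<in> J \<Longrightarrow> b l \<ge> 0"
  shows "(\<Prod>l\<in>J. b l) \<le> measure (gain_measure \<sigma>2) {\<alpha>. \<forall>l\<in>J. \<alpha> l \<in> A l}"
proof -
  interpret prob_space "gain_measure \<sigma>2" using prob_space_gain_measure assms(1) .
  have "ennreal (\<Prod>l\<in>J. b l) = (\<Prod>l\<in>J. ennreal (b l))" using assms by (simp add: prod_ennreal)
  also have "\<dots> \<le> (\<Prod>l\<in>J. emeasure (cgauss (\<sigma>2 l)) (A l))"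
    using assms by (intro prod_mono_ennreal) auto
  also have "\<dots> = ennreal (measure (gain_measure \<sigma>2) {\<alpha>. \<forall>l\<in>J. \<alpha> l \<in> A l})"
    using emeasure_gain_cylinder[of \<sigma>2 J A] assms by (simp add: emeasure_eq_measure)
  finally show ?thesis by (simp add: ennreal_le_iff)
qed

lemma UNIV_relay: "(UNIV :: relay set) = {R1, R2}"
  using relay.exhaust by auto

lemma finite_relay_set[simp]: "finite (A :: relay set)"
  by (rule finite_subset[of _ "{R1, R2}"]) (use UNIV_relay in blast, simp)

lemma relay_set_cases: "D = {} \<or> D = {R1} \<or> D = {R2} \<or> D = {R1, R2}"
  for D :: "relay set"
proof -
  have "D \<in> Pow {R1, R2}" using UNIV_relay by blast
  then show ?thesis by (auto simp: Pow_insert)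
qed

lemma relay_links[simp]:
  "src_relay R1 = SR1" "src_relay R2 = SR2" "relay_dst R1 = R1D" "relay_dst R2 = R2D"
  by (simp_all add: src_relay_def relay_dst_def)

definition integrand ::
  "real \<Rightarrow> (relay \<Rightarrow> real) \<Rightarrow> relay set \<Rightarrow> (link \<Rightarrow> complex) \<Rightarrow> real \<Rightarrow> real" where
  "integrand \<rho> \<tau> D \<alpha> f = ln (1 + \<rho> * (cmod (\<alpha> SD))\<^sup>2
     + \<rho> * (cmod (\<Sum>k\<in>D. \<alpha> (relay_dst k) * cis (2 * pi * f * \<tau> k)))\<^sup>2)"

lemma I_RTDA_eq_integral:
  "I_RTDA r \<sigma>2 Bw \<tau> snr \<alpha> = 1 / (2 * Bw) *
     integral {- Bw / 2 .. Bw / 2} (integrand (rho0 snr) \<tau> (decoding_set r \<sigma>2 snr \<alpha>) \<alpha>)"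
  unfolding I_RTDA_def integrand_def ..

lemma continuous_on_integrand:
  assumes "\<rho> \<ge> 0"
  shows "continuous_on S (integrand \<rho> \<tau> D \<alpha>)"
  unfolding integrand_def using assms
  by (intro continuous_intros) (auto, smt (verit) mult_nonneg_nonneg zero_le_power2)

lemma integrable_integrand:
  "\<rho> \<ge> 0 \<Longrightarrow> integrand \<rho> \<tau> D \<alpha> integrable_on {a..b}"
  by (rule integrable_continuous_interval[OF continuous_on_integrand])

lemma continuous_on_coordinate_fst[continuous_intros]:
  "continuous_on S (\<lambda>p::(link \<Rightarrow> complex) \<times> real. fst p l)"
  by (rule continuous_on_compose2[OF continuous_on_product_coordinates continuous_on_fst]) auto

lemma continuous_on_band_integral:
  assumes "\<rho> \<ge> 0"
  shows "continuous_on UNIV (\<lambda>\<alpha>. integral {a..b} (integrand \<rho> \<tau> D \<alpha>))"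
proof -
  have "continuous_on (UNIV \<times> cbox a b) (\<lambda>p::(link \<Rightarrow> complex) \<times> real.
      ln (1 + \<rho> * (cmod (fst p SD))\<^sup>2
        + \<rho> * (cmod (\<Sum>k\<in>D. fst p (relay_dst k) * cis (2 * pi * snd p * \<tau> k)))\<^sup>2))"
    using assms by (intro continuous_intros) (auto, smt (verit) mult_nonneg_nonneg zero_le_power2)
  then have "continuous_on (UNIV \<times> cbox a b) (\<lambda>(\<alpha>, f). integrand \<rho> \<tau> D \<alpha> f)"
    by (simp add: case_prod_beta integrand_def)
  then show ?thesis
    using integral_continuous_on_param[where U=UNIV and a=a and b=b] by (simp add: cbox_interval)
qed

lemma borel_measurable_coordinate[measurable]:
  "(\<lambda>\<alpha>::link \<Rightarrow> complex. \<alpha> l) \<in> borel_measurable borel"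
  by (rule borel_measurable_continuous_onI[OF continuous_on_product_coordinates])

text \<open>The mutual information is measurable: it is one of four continuous
  functions, selected by the measurable events \<open>R_k \<in> D(s)\<close>.\<close>
lemma borel_measurable_I_RTDA:
  assumes "snr \<ge> 0"
  shows "(\<lambda>\<alpha>. I_RTDA r \<sigma>2 Bw \<tau> snr \<alpha>) \<in> borel_measurable borel"
proof -
  define J where "J D \<alpha> = integral {- Bw / 2 .. Bw / 2} (integrand (rho0 snr) \<tau> D \<alpha>)" for D \<alpha>
  define P where "P k \<alpha> = (k \<in> decoding_set r \<sigma>2 snr \<alpha>)" for k \<alpha>
  have [measurable]: "J D \<in> borel_measurable borel" for D
    unfolding J_def using assms
    by (intro borel_measurable_continuous_onI continuous_on_band_integral) (simp add: rho0_def)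
  have [measurable]: "Measurable.pred borel (P k)" for k
    unfolding P_def decoding_set_def by measurable
  have "decoding_set r \<sigma>2 snr \<alpha> = (if P R1 \<alpha> then if P R2 \<alpha> then {R1,R2} else {R1}
       else if P R2 \<alpha> then {R2} else {})" for \<alpha>
    unfolding P_def using relay_set_cases[of "decoding_set r \<sigma>2 snr \<alpha>"] by auto
  then have eq: "I_RTDA r \<sigma>2 Bw \<tau> snr \<alpha> = 1 / (2 * Bw) * (if P R1 \<alpha> then if P R2 \<alpha> then J {R1,R2} \<alpha>
       else J {R1} \<alpha> else if P R2 \<alpha> then J {R2} \<alpha> else J {} \<alpha>)" for \<alpha>
    unfolding I_RTDA_eq_integral J_def by auto
  show ?thesis unfolding eq by measurable
qed

lemma outage_event_sets:
  assumes "snr \<ge> 0"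
  shows "{\<alpha> \<in> space (gain_measure \<sigma>2). I_RTDA r \<sigma>2 Bw \<tau> snr \<alpha> < target_rate r \<sigma>2 snr}
    \<in> sets (gain_measure \<sigma>2)"
  unfolding sets_gain_measure using borel_measurable_I_RTDA[OF assms] by measurable

lemma integral_ge_const:
  fixes g :: "real \<Rightarrow> real"
  assumes "g integrable_on {a..b}" "a \<le> b" "\<And>f. f \<in> {a..b} \<Longrightarrow> V \<le> g f"
  shows "(b - a) * V \<le> integral {a..b} g"
proof -
  have "integral {a..b} (\<lambda>_. V) \<le> integral {a..b} g"
    using assms by (intro integral_le) auto
  then show ?thesis using assms by simp
qed

lemma integral_le_const:
  fixes g :: "real \<Rightarrow> real"
  assumes "g integrable_on {a..b}" "a \<le> b" "\<And>f. f \<in> {a..b} \<Longrightarrow> g f \<le> V"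
  shows "integral {a..b} g \<le> (b - a) * V"
proof -
  have "integral {a..b} g \<le> integral {a..b} (\<lambda>_. V)"
    using assms by (intro integral_le) auto
  then show ?thesis using assms by simp
qed

lemma integral_window_indicator:
  fixes a b c w :: real
  assumes "w \<ge> 0"
  shows "indicat_real {c - w .. c + w} integrable_on {a..b}"
    and "integral {a..b} (indicat_real {c - w .. c + w}) \<le> 2 * w"
proof -
  have lm: "{c - w .. c + w} \<inter> {a..b} \<in> lmeasurable"
    by (intro lmeasurable_compact compact_Int) auto
  then show "indicat_real {c - w .. c + w} integrable_on {a..b}"
    by (simp add: integrable_on_indicator)
  have "indicat_real {c - w .. c + w} = (\<lambda>x. if x \<in> {c - w .. c + w} then 1 else 0)"
    by (auto simp: indicator_def)
  then have "integral {a..b} (indicat_real {c - w .. c + w})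
      = integral ({c - w .. c + w} \<inter> {a..b}) (\<lambda>_. 1::real)"
    by (simp only: integral_restrict_Int)
  also have "\<dots> \<le> integral {c - w .. c + w} (\<lambda>_. 1::real)"
    using lm by (intro integral_subset_le) (auto intro: integrable_on_const)
  also have "\<dots> = 2 * w" using assms by simp
  finally show "integral {a..b} (indicat_real {c - w .. c + w}) \<le> 2 * w" .
qed

text \<open>We compare \<open>g\<close> with
  \<open>L (1 - \<Sum> indicators)\<close>.\<close>
lemma integral_lower_outside_windows:
  fixes g :: "real \<Rightarrow> real" and a b L w :: real and c :: "'k \<Rightarrow> real"
  assumes gi: "g integrable_on {a..b}" and "a \<le> b" and K: "finite K" and L: "L \<ge> 0"
    and w: "w \<ge> 0"
    and g0: "\<And>f. f \<in> {a..b} \<Longrightarrow> 0 \<le> g f"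
    and gL: "\<And>f. f \<in> {a..b} \<Longrightarrow> (\<forall>k\<in>K. \<bar>f - c k\<bar> > w) \<Longrightarrow> L \<le> g f"
  shows "L * ((b - a) - card K * (2 * w)) \<le> integral {a..b} g"
proof -
  define cover where "cover f = (\<Sum>k\<in>K. indicat_real {c k - w .. c k + w} f)" for f
  define h where "h f = L - L * cover f" for f
  have cover_int: "cover integrable_on {a..b}"
    unfolding cover_def using integral_window_indicator(1)[OF w] by (intro integrable_sum K) auto
  have "integral {a..b} cover = (\<Sum>k\<in>K. integral {a..b} (indicat_real {c k - w .. c k + w}))"
    unfolding cover_def using integral_window_indicator(1)[OF w] by (intro integral_sum K) auto
  also have "\<dots> \<le> (\<Sum>k\<in>K. 2 * w)"
    using integral_window_indicator(2)[OF w] by (intro sum_mono) auto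
  finally have cover_le: "integral {a..b} cover \<le> card K * (2 * w)" by simp
  have "integral {a..b} h = L * (b - a) - L * integral {a..b} cover"
    unfolding h_def using cover_int \<open>a \<le> b\<close>
    by (subst integral_diff) (auto intro: integrable_on_mult_right)
  also have "\<dots> \<ge> L * (b - a) - L * (card K * (2 * w))"
    using cover_le L by (intro diff_left_mono mult_left_mono) auto
  finally have "L * ((b - a) - card K * (2 * w)) \<le> integral {a..b} h"
    by (simp add: algebra_simps)
  also have "integral {a..b} h \<le> integral {a..b} g"
  proof (intro integral_le gi)
    show "h integrable_on {a..b}"
      unfolding h_def using cover_int by (intro integrable_diff integrable_on_mult_right) auto
    fix f assume f: "f \<in> {a..b}"
    show "h f \<le> g f"
    proof (cases "\<forall>k\<in>K. \<bar>f - c k\<bar> > w")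
      case True
      then have "cover f = 0"
        unfolding cover_def by (intro sum.neutral) (auto simp: indicator_def abs_if split: if_splits)
      then show ?thesis using gL[OF f True] by (simp add: h_def)
    next
      case False
      then obtain k0 where k0: "k0 \<in> K" "\<bar>f - c k0\<bar> \<le> w" by auto
      then have "1 \<le> cover f"
        unfolding cover_def using K
        by (subst sum.remove[OF K k0(1)]) (auto simp: indicator_def abs_le_iff intro!: sum_nonneg)
      then have "h f \<le> 0"
        unfolding h_def using L mult_left_mono[of 1 "cover f" L] by simp
      then show ?thesis using g0[OF f] by simp
    qed
  qed
  finally show ?thesis .
qed

subsection \<open>Trigonometric facts and the two-tap channel\<close>

lemma cos_ge_far_from_odd_pi:
  fixes \<beta> \<eta> :: real
  assumes "0 \<le> \<eta>" "\<eta> \<le> pi" and far: "\<And>k::int. \<bar>\<beta> - (2 * of_int k + 1) * pi\<bar> \<ge> \<eta>"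
  shows "cos \<beta> \<ge> - cos \<eta>"
proof -
  define k where "k = \<lfloor>\<beta> / (2 * pi)\<rfloor>"
  define \<theta> where "\<theta> = \<beta> - (2 * of_int k + 1) * pi"
  have "of_int k \<le> \<beta> / (2 * pi)" "\<beta> / (2 * pi) < of_int k + 1"
    unfolding k_def by linarith+
  then have "2 * pi * of_int k \<le> \<beta>" "\<beta> < 2 * pi * (of_int k + 1)"
    using pi_gt_zero by (simp_all add: pos_le_divide_eq pos_divide_less_eq mult.commute)
  then have th: "- pi \<le> \<theta>" "\<theta> \<le> pi" unfolding \<theta>_def by (simp_all add: algebra_simps)
  have "\<beta> = \<theta> + pi + (2 * pi) * of_int k" unfolding \<theta>_def by (simp add: algebra_simps)
  then have cb: "cos \<beta> = - cos \<theta>" by (simp add: cos_add sin_add)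
  have "\<eta> \<le> \<bar>\<theta>\<bar>" using far[of k] unfolding \<theta>_def .
  then have "cos \<bar>\<theta>\<bar> \<le> cos \<eta>"
    using th assms by (intro cos_monotone_0_pi_le) auto
  then have "cos \<theta> \<le> cos \<eta>" by (cases "\<theta> \<ge> 0") auto
  then show ?thesis using cb by simp
qed

lemma real_two_phasor_sq:
  fixes r1 r2 t1 t2 :: real
  shows "(r1 * cos t1 + r2 * cos t2)\<^sup>2 + (r1 * sin t1 + r2 * sin t2)\<^sup>2
       = r1\<^sup>2 + r2\<^sup>2 + 2 * r1 * r2 * cos (t1 - t2)"
proof -
  have "(sin t1)\<^sup>2 + (cos t1)\<^sup>2 = 1" "(sin t2)\<^sup>2 + (cos t2)\<^sup>2 = 1" by simp_all
  then show ?thesis unfolding cos_diff by algebra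
qed

lemma two_phasor_sq:
  "(cmod (h1 * cis a + h2 * cis b))\<^sup>2 =
     (cmod h1)\<^sup>2 + (cmod h2)\<^sup>2 + 2 * cmod h1 * cmod h2 * cos (Arg h1 + a - (Arg h2 + b))"
proof -
  have e1: "h1 * cis a = rcis (cmod h1) (Arg h1 + a)"
    using rcis_cmod_Arg[of h1] by (simp add: rcis_def cis_mult[symmetric] mult.assoc)
  have e2: "h2 * cis b = rcis (cmod h2) (Arg h2 + b)"
    using rcis_cmod_Arg[of h2] by (simp add: rcis_def cis_mult[symmetric] mult.assoc)
  show ?thesis
    unfolding e1 e2
    by (subst cmod_power2) (simp only: Re_rcis Im_rcis plus_complex.sel real_two_phasor_sq)
qed

lemma two_phasor_sq_lower:
  fixes h1 h2 :: complex and a b \<eta> :: real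
  assumes \<eta>: "0 \<le> \<eta>" "\<eta> \<le> pi / 2"
    and far: "\<And>k::int. \<eta> \<le> \<bar>Arg h1 + a - (Arg h2 + b) - (2 * of_int k + 1) * pi\<bar>"
  shows "(1 - cos \<eta>) * ((cmod h1)\<^sup>2 + (cmod h2)\<^sup>2) \<le> (cmod (h1 * cis a + h2 * cis b))\<^sup>2"
proof -
  define p where "p = (cmod h1)\<^sup>2 + (cmod h2)\<^sup>2"
  define q where "q = 2 * cmod h1 * cmod h2"
  have cb: "- cos \<eta> \<le> cos (Arg h1 + a - (Arg h2 + b))"
    using \<eta> far by (intro cos_ge_far_from_odd_pi) auto
  have q: "0 \<le> q" "q \<le> p"
    unfolding p_def q_def by (simp, smt (verit) sum_squares_bound)
  have "0 \<le> cos \<eta>" using \<eta> by (intro cos_ge_zero) auto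
  then have "q * cos \<eta> \<le> p * cos \<eta>" using q by (simp add: mult_right_mono)
  moreover have "- (q * cos \<eta>) \<le> q * cos (Arg h1 + a - (Arg h2 + b))"
    using mult_left_mono[OF cb q(1)] by simp
  ultimately show ?thesis
    unfolding two_phasor_sq p_def[symmetric] q_def[symmetric] by (simp add: algebra_simps)
qed

lemma card_lattice_points_le:
  fixes x m :: real
  assumes "m \<ge> 0"
  shows "finite {k::int. \<bar>x + 2 * pi * of_int k\<bar> \<le> m}"
    and "real (card {k::int. \<bar>x + 2 * pi * of_int k\<bar> \<le> m}) \<le> m / pi + 1"
proof -
  define lo where "lo = (- m - x) / (2 * pi)"
  define hi where "hi = (m - x) / (2 * pi)"
  have sub: "{k::int. \<bar>x + 2 * pi * of_int k\<bar> \<le> m} \<subseteq> {\<lceil>lo\<rceil>..\<lfloor>hi\<rfloor>}"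
  proof
    fix k assume "k \<in> {k::int. \<bar>x + 2 * pi * of_int k\<bar> \<le> m}"
    then have "- m - x \<le> 2 * pi * of_int k" "2 * pi * of_int k \<le> m - x" by auto
    then have "lo \<le> of_int k" "of_int k \<le> hi"
      unfolding lo_def hi_def using pi_gt_zero by (simp_all add: field_simps)
    then show "k \<in> {\<lceil>lo\<rceil>..\<lfloor>hi\<rfloor>}" by (simp add: ceiling_le le_floor_iff)
  qed
  show "finite {k::int. \<bar>x + 2 * pi * of_int k\<bar> \<le> m}"
    using sub finite_subset by blast
  then have "card {k::int. \<bar>x + 2 * pi * of_int k\<bar> \<le> m} \<le> card {\<lceil>lo\<rceil>..\<lfloor>hi\<rfloor>}"
    using sub by (intro card_mono) auto
  then have c: "real (card {k::int. \<bar>x + 2 * pi * of_int k\<bar> \<le> m}) \<le> real (nat (\<lfloor>hi\<rfloor> - \<lceil>lo\<rceil> + 1))"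
    by simp
  have "real (nat (\<lfloor>hi\<rfloor> - \<lceil>lo\<rceil> + 1)) \<le> max 0 (hi - lo + 1)"
  proof -
    have "real_of_int \<lfloor>hi\<rfloor> \<le> hi" "lo \<le> real_of_int \<lceil>lo\<rceil>" by simp_all
    then show ?thesis
      by (cases "\<lfloor>hi\<rfloor> - \<lceil>lo\<rceil> + 1 \<ge> 0") (simp_all add: of_nat_nat, linarith)
  qed
  moreover have "hi - lo = m / pi" unfolding hi_def lo_def using pi_gt_zero by (simp add: field_simps)
  moreover have "m / pi \<ge> 0" using assms pi_gt_zero by simp
  ultimately show "real (card {k::int. \<bar>x + 2 * pi * of_int k\<bar> \<le> m}) \<le> m / pi + 1"
    using c by linarith
qed

lemma phase_far_from_null:
  fixes \<delta> \<phi>0 f \<eta> :: real and k :: int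
  assumes "\<delta> \<noteq> 0"
    and far: "\<eta> / (2 * pi * \<bar>\<delta>\<bar>) < \<bar>f - (pi - \<phi>0 + 2 * pi * of_int k) / (2 * pi * \<delta>)\<bar>"
  shows "\<eta> \<le> \<bar>\<phi>0 + 2 * pi * f * \<delta> - (2 * of_int k + 1) * pi\<bar>"
proof -
  define c where "c = (pi - \<phi>0 + 2 * pi * of_int k) / (2 * pi * \<delta>)"
  have pos: "2 * pi * \<bar>\<delta>\<bar> > 0" using assms by simp
  have "\<phi>0 + 2 * pi * f * \<delta> - (2 * of_int k + 1) * pi = 2 * pi * \<delta> * (f - c)"
    unfolding c_def using assms by (simp add: field_simps)
  then have "\<bar>\<phi>0 + 2 * pi * f * \<delta> - (2 * of_int k + 1) * pi\<bar> = 2 * pi * \<bar>\<delta>\<bar> * \<bar>f - c\<bar>"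
    by (simp add: abs_mult)
  moreover have "2 * pi * \<bar>\<delta>\<bar> * (\<eta> / (2 * pi * \<bar>\<delta>\<bar>)) \<le> 2 * pi * \<bar>\<delta>\<bar> * \<bar>f - c\<bar>"
    using far pos unfolding c_def by (intro mult_left_mono) auto
  ultimately show ?thesis using assms by simp
qed

lemma two_tap_sq_lower_off_nulls:
  fixes h1 h2 :: complex and t1 t2 f \<eta> :: real
  assumes "t1 \<noteq> t2" "0 \<le> \<eta>" "\<eta> \<le> pi / 2"
    and far: "\<And>k::int. \<eta> / (2 * pi * \<bar>t1 - t2\<bar>)
      < \<bar>f - (pi - (Arg h1 - Arg h2) + 2 * pi * of_int k) / (2 * pi * (t1 - t2))\<bar>"
  shows "(1 - cos \<eta>) * ((cmod h1)\<^sup>2 + (cmod h2)\<^sup>2)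
     \<le> (cmod (h1 * cis (2 * pi * f * t1) + h2 * cis (2 * pi * f * t2)))\<^sup>2"
proof (rule two_phasor_sq_lower)
  show "\<eta> \<le> \<bar>Arg h1 + 2 * pi * f * t1 - (Arg h2 + 2 * pi * f * t2) - (2 * of_int k + 1) * pi\<bar>"
    for k :: int
    using phase_far_from_null[of "t1 - t2" \<eta> f "Arg h1 - Arg h2" k] far[of k] assms(1)
    by (simp add: algebra_simps)
qed (use assms in auto)

lemma card_null_windows_le:
  fixes x \<delta> Bw \<eta> :: real
  assumes N1: "1 \<le> \<bar>\<delta>\<bar> * Bw" and \<eta>: "0 \<le> \<eta>" "\<eta> \<le> pi"
  shows "finite {k::int. \<bar>x + 2 * pi * of_int k\<bar> \<le> pi * \<bar>\<delta>\<bar> * Bw + \<eta>}"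
    and "real (card {k::int. \<bar>x + 2 * pi * of_int k\<bar> \<le> pi * \<bar>\<delta>\<bar> * Bw + \<eta>}) \<le> 3 * (\<bar>\<delta>\<bar> * Bw)"
proof -
  have "0 \<le> pi * (\<bar>\<delta>\<bar> * Bw)" using N1 by simp
  then have m0: "0 \<le> pi * \<bar>\<delta>\<bar> * Bw + \<eta>" using \<eta> by (simp add: mult.assoc)
  show "finite {k::int. \<bar>x + 2 * pi * of_int k\<bar> \<le> pi * \<bar>\<delta>\<bar> * Bw + \<eta>}"
    using card_lattice_points_le(1)[OF m0] .
  have "(pi * \<bar>\<delta>\<bar> * Bw + \<eta>) / pi = \<bar>\<delta>\<bar> * Bw + \<eta> / pi"
    by (simp add: add_divide_distrib)
  moreover have "\<eta> / pi \<le> 1" using \<eta> by simp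
  ultimately show "real (card {k::int. \<bar>x + 2 * pi * of_int k\<bar> \<le> pi * \<bar>\<delta>\<bar> * Bw + \<eta>}) \<le> 3 * (\<bar>\<delta>\<bar> * Bw)"
    using card_lattice_points_le(2)[OF m0, of x] N1 by linarith
qed

text \<open>Null centres outside the counted set lie beyond the band enlarged by one
  window half-width, so a frequency in the band that avoids the counted windows
  avoids all of them.\<close>
lemma far_from_all_nulls:
  fixes x \<delta> Bw \<eta> f :: real and k :: int
  assumes ad: "\<bar>\<delta>\<bar> > 0" and f: "\<bar>f\<bar> \<le> Bw / 2"
    and farK: "\<And>k::int. \<bar>x + 2 * pi * of_int k\<bar> \<le> pi * \<bar>\<delta>\<bar> * Bw + \<eta> \<Longrightarrow>
      \<eta> / (2 * pi * \<bar>\<delta>\<bar>) < \<bar>f - (x + 2 * pi * of_int k) / (2 * pi * \<delta>)\<bar>"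
  shows "\<eta> / (2 * pi * \<bar>\<delta>\<bar>) < \<bar>f - (x + 2 * pi * of_int k) / (2 * pi * \<delta>)\<bar>"
proof (cases "\<bar>x + 2 * pi * of_int k\<bar> \<le> pi * \<bar>\<delta>\<bar> * Bw + \<eta>")
  case False
  define X where "X = \<bar>x + 2 * pi * of_int k\<bar>"
  have "(pi * \<bar>\<delta>\<bar> * Bw + \<eta>) / (2 * pi * \<bar>\<delta>\<bar>) < X / (2 * pi * \<bar>\<delta>\<bar>)"
    using False ad unfolding X_def by (intro divide_strict_right_mono) auto
  moreover have "(pi * \<bar>\<delta>\<bar> * Bw + \<eta>) / (2 * pi * \<bar>\<delta>\<bar>) = Bw / 2 + \<eta> / (2 * pi * \<bar>\<delta>\<bar>)"
    using ad by (simp add: field_simps)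
  moreover have "\<bar>(x + 2 * pi * of_int k) / (2 * pi * \<delta>)\<bar> = X / (2 * pi * \<bar>\<delta>\<bar>)"
    unfolding X_def by (simp add: abs_divide abs_mult)
  ultimately show ?thesis using f by linarith
qed (rule farK)

text \<open>Key estimate of the delay-diversity scheme: when the relative delay spans at
  least one inverse bandwidth, the band integral of the two-tap capacity is at least
  that of a flat channel with gain \<open>(1 - cos \<eta>)(|h1|\<^sup>2 + |h2|\<^sup>2)\<close> over the fraction
  \<open>1 - 3\<eta>/\<pi>\<close> of the band: the null windows meeting the band are excluded.\<close>
lemma two_tap_integral_lower:
  fixes Bw \<eta> \<rho> A t1 t2 :: real and h1 h2 :: complex
  assumes Bw: "Bw > 0" and N1: "\<bar>t1 - t2\<bar> * Bw \<ge> 1" and \<eta>: "0 < \<eta>" "\<eta> \<le> pi / 2"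
    and \<rho>: "\<rho> \<ge> 0" and A: "A \<ge> 0"
  shows "Bw * (1 - 3 * \<eta> / pi) * ln (1 + \<rho> * (1 - cos \<eta>) * ((cmod h1)\<^sup>2 + (cmod h2)\<^sup>2))
     \<le> integral {- Bw / 2 .. Bw / 2}
          (\<lambda>f. ln (1 + A + \<rho> * (cmod (h1 * cis (2 * pi * f * t1) + h2 * cis (2 * pi * f * t2)))\<^sup>2))"
proof -
  define \<delta> where "\<delta> = t1 - t2"
  define L where "L = ln (1 + \<rho> * (1 - cos \<eta>) * ((cmod h1)\<^sup>2 + (cmod h2)\<^sup>2))"
  define w where "w = \<eta> / (2 * pi * \<bar>\<delta>\<bar>)"
  define c where "c k = (pi - (Arg h1 - Arg h2) + 2 * pi * of_int k) / (2 * pi * \<delta>)" for k :: int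
  define K where "K = {k::int. \<bar>(pi - (Arg h1 - Arg h2)) + 2 * pi * of_int k\<bar> \<le> pi * \<bar>\<delta>\<bar> * Bw + \<eta>}"
  define g where "g f = ln (1 + A + \<rho> * (cmod (h1 * cis (2 * pi * f * t1)
      + h2 * cis (2 * pi * f * t2)))\<^sup>2)" for f
  have N1': "1 \<le> \<bar>\<delta>\<bar> * Bw" using N1 by (simp add: \<delta>_def)
  then have ad: "\<bar>\<delta>\<bar> > 0" by auto
  have L0: "L \<ge> 0" unfolding L_def using \<rho> by simp
  have w0: "w \<ge> 0" unfolding w_def using \<eta> by simp
  have Kfin: "finite K" and Kc: "real (card K) \<le> 3 * (\<bar>\<delta>\<bar> * Bw)"
    unfolding K_def using card_null_windows_le[OF N1'] \<eta> by auto
  have gi: "g integrable_on {- Bw / 2 .. Bw / 2}"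
    unfolding g_def using \<rho> A
    by (intro integrable_continuous_interval continuous_intros)
      (auto, smt (verit) mult_nonneg_nonneg zero_le_power2)
  have g0: "0 \<le> g f" for f
    unfolding g_def using \<rho> A by simp
  have gL: "L \<le> g f"
    if f: "f \<in> {- Bw / 2 .. Bw / 2}" and farK: "\<forall>k\<in>K. \<bar>f - c k\<bar> > w" for f
  proof -
    have far: "\<bar>f - c k\<bar> > w" for k
      using far_from_all_nulls[OF ad, of f Bw "pi - (Arg h1 - Arg h2)" \<eta> k] f farK
      unfolding K_def c_def w_def by auto
    have "(1 - cos \<eta>) * ((cmod h1)\<^sup>2 + (cmod h2)\<^sup>2)
        \<le> (cmod (h1 * cis (2 * pi * f * t1) + h2 * cis (2 * pi * f * t2)))\<^sup>2"
      using far ad \<eta> unfolding w_def c_def \<delta>_def by (intro two_tap_sq_lower_off_nulls) auto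
    then have "\<rho> * ((1 - cos \<eta>) * ((cmod h1)\<^sup>2 + (cmod h2)\<^sup>2))
        \<le> \<rho> * (cmod (h1 * cis (2 * pi * f * t1) + h2 * cis (2 * pi * f * t2)))\<^sup>2"
      using \<rho> by (rule mult_left_mono)
    moreover have "0 \<le> \<rho> * ((1 - cos \<eta>) * ((cmod h1)\<^sup>2 + (cmod h2)\<^sup>2))" using \<rho> by simp
    ultimately show ?thesis unfolding L_def g_def using A
      by (subst ln_le_cancel_iff) (auto simp: mult.assoc)
  qed
  have main: "L * ((Bw / 2 - - Bw / 2) - card K * (2 * w)) \<le> integral {- Bw / 2 .. Bw / 2} g"
    by (rule integral_lower_outside_windows[OF gi _ Kfin L0 w0, where c=c]) (use Bw g0 gL in auto)
  have "card K * (2 * w) \<le> 3 * (\<bar>\<delta>\<bar> * Bw) * (2 * w)"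
    using Kc w0 by (intro mult_right_mono) auto
  also have "\<dots> = Bw * (3 * \<eta> / pi)" unfolding w_def using ad by (simp add: field_simps)
  finally have "L * (card K * (2 * w)) \<le> L * (Bw * (3 * \<eta> / pi))"
    using L0 by (rule mult_left_mono)
  then have "Bw * (1 - 3 * \<eta> / pi) * L \<le> L * ((Bw / 2 - - Bw / 2) - card K * (2 * w))"
    by (simp add: algebra_simps)
  with main show ?thesis unfolding L_def g_def by (simp add: mult.assoc)
qed

subsection \<open>Deterministic conditions for outage\<close>

text \<open>If the direct and both relay-destination gains have
  squared modulus at most \<open>e\<close>, the integrand is at most \<open>ln (1 + 5\<rho>e)\<close> whatever the
  decoding set is, since the relay sum has squared modulus at most \<open>4e\<close>.\<close>
lemma relay_sum_sq_le:
  fixes D :: "relay set"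
  assumes "(cmod (\<alpha> R1D))\<^sup>2 \<le> e" "(cmod (\<alpha> R2D))\<^sup>2 \<le> e"
  shows "(cmod (\<Sum>k\<in>D. \<alpha> (relay_dst k) * cis (\<theta> k)))\<^sup>2 \<le> 4 * e"
proof -
  have e0: "e \<ge> 0" using assms(1) by (meson order.trans zero_le_power2)
  have b: "cmod (\<alpha> (relay_dst k)) \<le> sqrt e" for k
    using assms by (cases k) (auto intro: real_le_rsqrt)
  have "cmod (\<Sum>k\<in>D. \<alpha> (relay_dst k) * cis (\<theta> k)) \<le> (\<Sum>k\<in>D. cmod (\<alpha> (relay_dst k)))"
    using norm_sum[of "\<lambda>k. \<alpha> (relay_dst k) * cis (\<theta> k)" D] by (simp add: norm_mult)
  also have "\<dots> \<le> (\<Sum>k\<in>UNIV. cmod (\<alpha> (relay_dst k)))"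
    by (intro sum_mono2) auto
  also have "\<dots> \<le> (\<Sum>k\<in>(UNIV::relay set). sqrt e)"
    using b by (intro sum_mono) auto
  also have "\<dots> = 2 * sqrt e" by (simp add: UNIV_relay)
  finally have "(cmod (\<Sum>k\<in>D. \<alpha> (relay_dst k) * cis (\<theta> k)))\<^sup>2 \<le> (2 * sqrt e)\<^sup>2"
    by (intro power_mono) auto
  also have "\<dots> = 4 * e" using e0 by (simp add: power_mult_distrib)
  finally show ?thesis .
qed

lemma outage_of_small_gains:
  assumes Bw: "Bw > 0" and snr: "snr \<ge> 0" and e: "e \<ge> 0"
    and small_gains: "(cmod (\<alpha> SD))\<^sup>2 \<le> e" "(cmod (\<alpha> R1D))\<^sup>2 \<le> e" "(cmod (\<alpha> R2D))\<^sup>2 \<le> e"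
    and small: "5 * rho0 snr * e < exp (2 * target_rate r \<sigma>2 snr) - 1"
  shows "I_RTDA r \<sigma>2 Bw \<tau> snr \<alpha> < target_rate r \<sigma>2 snr"
proof -
  let ?\<rho> = "rho0 snr"
  let ?D = "decoding_set r \<sigma>2 snr \<alpha>"
  define V where "V = ln (1 + 5 * ?\<rho> * e)"
  have \<rho>0: "?\<rho> \<ge> 0" using snr by (simp add: rho0_def)
  have pointwise: "integrand ?\<rho> \<tau> ?D \<alpha> f \<le> V" for f
  proof -
    have "?\<rho> * (cmod (\<alpha> SD))\<^sup>2 \<le> ?\<rho> * e" using small_gains(1) \<rho>0 by (rule mult_left_mono)
    moreover have "?\<rho> * (cmod (\<Sum>k\<in>?D. \<alpha> (relay_dst k) * cis (2 * pi * f * \<tau> k)))\<^sup>2 \<le> ?\<rho> * (4 * e)"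
      using relay_sum_sq_le[OF small_gains(2,3)] \<rho>0 by (rule mult_left_mono)
    moreover have "0 \<le> 5 * ?\<rho> * e" using \<rho>0 e by simp
    ultimately show ?thesis unfolding integrand_def V_def using \<rho>0
      by (subst ln_le_cancel_iff) (auto simp: algebra_simps add_pos_nonneg)
  qed
  have "integral {- Bw / 2 .. Bw / 2} (integrand ?\<rho> \<tau> ?D \<alpha>) \<le> (Bw / 2 - - Bw / 2) * V"
    using Bw pointwise by (intro integral_le_const integrable_integrand[OF \<rho>0]) auto
  then have "I_RTDA r \<sigma>2 Bw \<tau> snr \<alpha> \<le> V / 2"
    unfolding I_RTDA_eq_integral using Bw by (simp add: field_simps)
  moreover have "V < ln (exp (2 * target_rate r \<sigma>2 snr))" unfolding V_def
    using small \<rho>0 e by (subst ln_less_cancel_iff) (auto intro!: add_pos_nonneg)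
  ultimately show ?thesis by simp
qed

text \<open>The gain threshold below which a channel of energy \<open>y\<close>
  counts as weak, for the null-window parameter \<open>\<eta>\<close>; it is chosen so that both a
  flat gain \<open>y\<close> and a two-tap energy \<open>y\<close> (via the two-tap estimate) reach rate \<open>R\<close>
  once \<open>y \<ge> null_threshold \<rho> R \<eta>\<close>.\<close>
definition null_threshold :: "real \<Rightarrow> real \<Rightarrow> real \<Rightarrow> real" where
  "null_threshold \<rho> R \<eta> = (exp (2 * R / (1 - 3 * \<eta> / pi)) - 1) / (\<rho> * (1 - cos \<eta>))"

lemma one_minus_cos_pos: "0 < \<eta> \<Longrightarrow> \<eta> \<le> pi \<Longrightarrow> 0 < 1 - cos \<eta>"
  using cos_monotone_0_pi[of 0 \<eta>] by simp

lemma below_null_threshold: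
  assumes \<rho>: "\<rho> > 0" and \<eta>: "0 < \<eta>" "3 * \<eta> < pi" and "y \<ge> 0"
    and rate: "(1 - 3 * \<eta> / pi) * ln (1 + \<rho> * (1 - cos \<eta>) * y) < 2 * R"
  shows "y < null_threshold \<rho> R \<eta>"
proof -
  have \<kappa>: "0 < 1 - cos \<eta>" using one_minus_cos_pos[of \<eta>] \<eta> by simp
  have \<theta>: "0 < 1 - 3 * \<eta> / pi" using \<eta> by simp
  have "ln (1 + \<rho> * (1 - cos \<eta>) * y) < 2 * R / (1 - 3 * \<eta> / pi)"
    using rate \<theta> by (simp add: field_simps mult.commute)
  then have "exp (ln (1 + \<rho> * (1 - cos \<eta>) * y)) < exp (2 * R / (1 - 3 * \<eta> / pi))" by simp
  moreover have "0 < 1 + \<rho> * (1 - cos \<eta>) * y" using \<rho> \<kappa> \<open>y \<ge> 0\<close> by (simp add: add_pos_nonneg)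
  ultimately have "\<rho> * (1 - cos \<eta>) * y < exp (2 * R / (1 - 3 * \<eta> / pi)) - 1" by simp
  then show ?thesis unfolding null_threshold_def using \<rho> \<kappa> by (simp add: field_simps)
qed

lemma below_null_threshold_flat:
  assumes \<rho>: "\<rho> > 0" and \<eta>: "0 < \<eta>" "3 * \<eta> < pi" and y: "y \<ge> 0"
    and rate: "ln (1 + \<rho> * y) < 2 * R"
  shows "y < null_threshold \<rho> R \<eta>"
proof (rule below_null_threshold[OF \<rho> \<eta> y])
  have \<kappa>: "0 < 1 - cos \<eta>" "1 - cos \<eta> \<le> 1" using one_minus_cos_pos[of \<eta>] \<eta> by (auto intro!: cos_ge_zero)
  have l0: "0 \<le> ln (1 + \<rho> * (1 - cos \<eta>) * y)" using \<rho> \<kappa> y by simp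
  have "(1 - 3 * \<eta> / pi) * ln (1 + \<rho> * (1 - cos \<eta>) * y) \<le> ln (1 + \<rho> * (1 - cos \<eta>) * y)"
    using l0 \<eta> by (intro mult_left_le_one_le) auto
  also have "\<dots> \<le> ln (1 + \<rho> * y)"
  proof -
    have "(1 - cos \<eta>) * y \<le> y" by (rule mult_left_le_one_le) (use \<kappa> y in auto)
    then have "\<rho> * ((1 - cos \<eta>) * y) \<le> \<rho> * y" using \<rho> by (simp add: mult_left_mono)
    moreover have "0 \<le> \<rho> * (1 - cos \<eta>) * y" using \<rho> \<kappa> y by simp
    ultimately have "0 \<le> \<rho> * (1 - cos \<eta>) * y" "\<rho> * (1 - cos \<eta>) * y \<le> \<rho> * y"
      by (simp_all add: mult.assoc)
    then show ?thesis by (subst ln_le_cancel_iff) (auto simp: add_pos_nonneg)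
  qed
  finally show "(1 - 3 * \<eta> / pi) * ln (1 + \<rho> * (1 - cos \<eta>) * y) < 2 * R" using rate by simp
qed

lemma outage_band_integral_less:
  assumes "Bw > 0" and "I_RTDA r \<sigma>2 Bw \<tau> snr \<alpha> < target_rate r \<sigma>2 snr"
  shows "integral {- Bw / 2 .. Bw / 2} (integrand (rho0 snr) \<tau> (decoding_set r \<sigma>2 snr \<alpha>) \<alpha>)
     < 2 * target_rate r \<sigma>2 snr * Bw"
  using assms unfolding I_RTDA_eq_integral by (simp add: field_simps)

lemma outage_integrand_lower_less:
  assumes Bw: "Bw > 0" and snr: "snr \<ge> 0"
    and out: "I_RTDA r \<sigma>2 Bw \<tau> snr \<alpha> < target_rate r \<sigma>2 snr"
    and V: "\<And>f. V \<le> integrand (rho0 snr) \<tau> (decoding_set r \<sigma>2 snr \<alpha>) \<alpha> f"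
  shows "V < 2 * target_rate r \<sigma>2 snr"
proof -
  have "(Bw / 2 - - Bw / 2) * V
      \<le> integral {- Bw / 2 .. Bw / 2} (integrand (rho0 snr) \<tau> (decoding_set r \<sigma>2 snr \<alpha>) \<alpha>)"
    using Bw snr V by (intro integral_ge_const integrable_integrand) (auto simp: rho0_def)
  with outage_band_integral_less[OF Bw out] have "Bw * V < Bw * (2 * target_rate r \<sigma>2 snr)"
    by (simp add: algebra_simps)
  then show ?thesis using Bw by simp
qed

lemma weak_relay_links_of_outage_both_decoded:
  assumes Bw: "Bw > 0" and N1: "\<bar>\<tau> R2 - \<tau> R1\<bar> * Bw \<ge> 1" and snr: "snr > 0"
    and \<eta>: "0 < \<eta>" "3 * \<eta> < pi"
    and out: "I_RTDA r \<sigma>2 Bw \<tau> snr \<alpha> < target_rate r \<sigma>2 snr"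
    and D2: "decoding_set r \<sigma>2 snr \<alpha> = {R1, R2}"
  shows "(cmod (\<alpha> R1D))\<^sup>2 < null_threshold (rho0 snr) (target_rate r \<sigma>2 snr) \<eta>
       \<and> (cmod (\<alpha> R2D))\<^sup>2 < null_threshold (rho0 snr) (target_rate r \<sigma>2 snr) \<eta>"
proof -
  define \<rho> where "\<rho> = rho0 snr"
  define R where "R = target_rate r \<sigma>2 snr"
  define p where "p = (cmod (\<alpha> R1D))\<^sup>2 + (cmod (\<alpha> R2D))\<^sup>2"
  have \<rho>0: "\<rho> > 0" using snr by (simp add: \<rho>_def rho0_def)
  have "integrand \<rho> \<tau> (decoding_set r \<sigma>2 snr \<alpha>) \<alpha> = (\<lambda>f. ln (1 + \<rho> * (cmod (\<alpha> SD))\<^sup>2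
      + \<rho> * (cmod (\<alpha> R1D * cis (2 * pi * f * \<tau> R1) + \<alpha> R2D * cis (2 * pi * f * \<tau> R2)))\<^sup>2))"
    unfolding integrand_def D2 by simp
  then have "Bw * (1 - 3 * \<eta> / pi) * ln (1 + \<rho> * (1 - cos \<eta>) * p)
      \<le> integral {- Bw / 2 .. Bw / 2} (integrand \<rho> \<tau> (decoding_set r \<sigma>2 snr \<alpha>) \<alpha>)"
    unfolding p_def using \<rho>0 \<eta> N1
    by (simp only:) (intro two_tap_integral_lower Bw, auto simp: abs_minus_commute)
  with outage_band_integral_less[OF Bw out]
  have "Bw * ((1 - 3 * \<eta> / pi) * ln (1 + \<rho> * (1 - cos \<eta>) * p)) < Bw * (2 * R)"
    unfolding \<rho>_def R_def by (simp add: algebra_simps)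
  then have "(1 - 3 * \<eta> / pi) * ln (1 + \<rho> * (1 - cos \<eta>) * p) < 2 * R" using Bw by simp
  then have "p < null_threshold \<rho> R \<eta>"
    using \<rho>0 \<eta> by (intro below_null_threshold) (auto simp: p_def)
  then show ?thesis unfolding p_def \<rho>_def R_def by (smt (verit) zero_le_power2)
qed

text \<open>In outage the direct gain is weak, and so are two more gains: for each
  relay, either its source link (it did not decode) or its destination link (its
  retransmission does not help) is weak; if both relays decoded, both destination
  links are weak by the two-tap estimate.\<close>
lemma weak_links_of_outage:
  assumes Bw: "Bw > 0" and N1: "\<bar>\<tau> R2 - \<tau> R1\<bar> * Bw \<ge> 1" and snr: "snr > 0"
    and \<eta>: "0 < \<eta>" "3 * \<eta> < pi"
    and out: "I_RTDA r \<sigma>2 Bw \<tau> snr \<alpha> < target_rate r \<sigma>2 snr"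
    and T: "T = null_threshold (rho0 snr) (target_rate r \<sigma>2 snr) \<eta>"
  shows "(cmod (\<alpha> SD))\<^sup>2 < T \<and>
    (((cmod (\<alpha> SR1))\<^sup>2 < T \<and> (cmod (\<alpha> SR2))\<^sup>2 < T) \<or>
     ((cmod (\<alpha> SR2))\<^sup>2 < T \<and> (cmod (\<alpha> R1D))\<^sup>2 < T) \<or>
     ((cmod (\<alpha> SR1))\<^sup>2 < T \<and> (cmod (\<alpha> R2D))\<^sup>2 < T) \<or>
     ((cmod (\<alpha> R1D))\<^sup>2 < T \<and> (cmod (\<alpha> R2D))\<^sup>2 < T))"
proof -
  define \<rho> where "\<rho> = rho0 snr"
  define R where "R = target_rate r \<sigma>2 snr"
  define D where "D = decoding_set r \<sigma>2 snr \<alpha>"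
  have \<rho>0: "\<rho> > 0" using snr by (simp add: \<rho>_def rho0_def)
  have lower: "V < 2 * R" if "\<And>f. V \<le> integrand \<rho> \<tau> D \<alpha> f" for V
    using outage_integrand_lower_less[OF Bw _ out] snr that unfolding \<rho>_def D_def R_def by simp
  have flat: "y < T" if "y \<ge> 0" "ln (1 + \<rho> * y) < 2 * R" for y
    unfolding T \<rho>_def[symmetric] R_def[symmetric] using below_null_threshold_flat[OF \<rho>0 \<eta>] that .
  have single: "(cmod (\<alpha> l))\<^sup>2 < T"
    if "\<And>f. (cmod (\<alpha> l))\<^sup>2 \<le> (cmod (\<alpha> SD))\<^sup>2
        + (cmod (\<Sum>k\<in>D. \<alpha> (relay_dst k) * cis (2 * pi * f * \<tau> k)))\<^sup>2" for l
  proof (intro flat lower)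
    fix f
    show "ln (1 + \<rho> * (cmod (\<alpha> l))\<^sup>2) \<le> integrand \<rho> \<tau> D \<alpha> f"
      unfolding integrand_def using that[of f] \<rho>0
      by (subst ln_le_cancel_iff) (auto simp: add_pos_nonneg distrib_left[symmetric] mult_left_mono)
  qed simp
  have direct: "(cmod (\<alpha> SD))\<^sup>2 < T" by (rule single) simp
  have undecoded: "(cmod (\<alpha> (src_relay k)))\<^sup>2 < T" if "k \<notin> D" for k
    using that by (intro flat) (auto simp: D_def decoding_set_def R_def \<rho>_def)
  have alone: "(cmod (\<alpha> (relay_dst k)))\<^sup>2 < T" if "D = {k}" for k
    by (rule single) (simp add: that norm_mult)
  have both: "(cmod (\<alpha> R1D))\<^sup>2 < T \<and> (cmod (\<alpha> R2D))\<^sup>2 < T" if "D = {R1, R2}"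
    using weak_relay_links_of_outage_both_decoded[OF Bw N1 snr \<eta> out] that T
    unfolding D_def by simp
  from relay_set_cases[of D] show ?thesis
  proof (elim disjE)
    assume "D = {}" then show ?thesis using undecoded[of R1] undecoded[of R2] direct by auto
  next
    assume d: "D = {R1}" then show ?thesis using undecoded[of R2] alone[OF d] direct by auto
  next
    assume d: "D = {R2}" then show ?thesis using undecoded[of R1] alone[OF d] direct by auto
  next
    assume d: "D = {R1, R2}" then show ?thesis using both[OF d] direct by auto
  qed
qed

subsection \<open>Bounds on the outage probability\<close>

text \<open>Lower bound: the event that the direct and relay-destination gains all lie in
  a small square is contained in the outage event, and has probability of order
  \<open>e^3\<close> by independence.\<close>
lemma outage_prob_lower:
  assumes \<sigma>: "\<And>l. \<sigma>2 l > 0" and Bw: "Bw > 0" and snr: "snr \<ge> 0" and e: "e > 0"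
    and e_le: "\<And>l. l \<in> {SD, R1D, R2D} \<Longrightarrow> e \<le> \<sigma>2 l"
    and small: "5 * rho0 snr * e < exp (2 * target_rate r \<sigma>2 snr) - 1"
  shows "e ^ 3 * (\<Prod>l\<in>{SD, R1D, R2D}. 2 * exp (-1) / (pi * \<sigma>2 l)) \<le> outage_prob r \<sigma>2 Bw \<tau> snr"
proof -
  interpret prob_space "gain_measure \<sigma>2" using prob_space_gain_measure \<sigma> .
  define a where "a = sqrt (e / 2)"
  have a0: "a > 0" and a2: "a\<^sup>2 = e / 2" using e by (simp_all add: a_def)
  define Q where "Q = box (Complex (-a) (-a)) (Complex a a)"
  define B where "B = {\<alpha>::link \<Rightarrow> complex. \<forall>l\<in>{SD, R1D, R2D}. \<alpha> l \<in> Q}"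
  define Out where "Out = {\<alpha> \<in> space (gain_measure \<sigma>2).
      I_RTDA r \<sigma>2 Bw \<tau> snr \<alpha> < target_rate r \<sigma>2 snr}"
  have inQ: "(cmod z)\<^sup>2 \<le> e" if "z \<in> Q" for z
  proof -
    have "\<bar>Re z\<bar> < a" "\<bar>Im z\<bar> < a"
      using that by (auto simp: Q_def box_def Basis_complex_def inner_complex_def)
    then have "(Re z)\<^sup>2 \<le> a\<^sup>2" "(Im z)\<^sup>2 \<le> a\<^sup>2"
      using a0 by (auto simp: abs_le_square_iff[symmetric])
    then show ?thesis using a2 by (simp add: cmod_power2)
  qed
  have "B \<subseteq> Out"
    unfolding B_def Out_def using inQ outage_of_small_gains[OF Bw snr less_imp_le[OF e] _ _ _ small]
    by auto
  have "(\<Prod>l\<in>{SD, R1D, R2D}. e * (2 * exp (-1) / (pi * \<sigma>2 l))) \<le> measure (gain_measure \<sigma>2) B"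
    unfolding B_def
  proof (rule measure_gain_cylinder_ge[OF \<sigma>])
    fix l assume l: "l \<in> {SD, R1D, R2D}"
    have "exp (-1) \<le> exp (- e / \<sigma>2 l)" using e_le[OF l] \<sigma>[of l] by simp
    then have "e * (2 * exp (-1)) \<le> e * (2 * exp (- e / \<sigma>2 l))" using e by simp
    also have "e * (2 * exp (- e / \<sigma>2 l)) = 4 * a\<^sup>2 * exp (- 2 * a\<^sup>2 / \<sigma>2 l)"
      unfolding a2 by simp
    finally have "e * (2 * exp (-1)) / (pi * \<sigma>2 l) \<le> 4 * a\<^sup>2 * exp (- 2 * a\<^sup>2 / \<sigma>2 l) / (pi * \<sigma>2 l)"
      using \<sigma>[of l] by (simp add: divide_right_mono)
    then have "e * (2 * exp (-1) / (pi * \<sigma>2 l)) \<le> 4 * a\<^sup>2 * exp (- 2 * a\<^sup>2 / \<sigma>2 l) / (pi * \<sigma>2 l)"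
      by simp
    then show "ennreal (e * (2 * exp (-1) / (pi * \<sigma>2 l))) \<le> emeasure (cgauss (\<sigma>2 l)) Q"
      unfolding Q_def using cgauss_square_lower[OF \<sigma> a0] order.trans ennreal_leI by blast
    show "0 \<le> e * (2 * exp (-1) / (pi * \<sigma>2 l))" using e \<sigma>[of l] by simp
  qed (simp add: Q_def)
  also have "\<dots> \<le> measure (gain_measure \<sigma>2) Out"
    using \<open>B \<subseteq> Out\<close> outage_event_sets[OF snr] unfolding Out_def by (intro finite_measure_mono) auto
  finally show ?thesis unfolding outage_prob_def Out_def prod.distrib by (simp add: power3_eq_cube)
qed

lemma null_threshold_nonneg:
  assumes "\<rho> > 0" "0 < \<eta>" "3 * \<eta> < pi" "R \<ge> 0"
  shows "null_threshold \<rho> R \<eta> \<ge> 0"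
  using assms one_minus_cos_pos[of \<eta>] by (simp add: null_threshold_def)

text \<open>Upper bound: by the necessary condition the outage event lies in the union of
  four cylinder events, each requiring three distinct gains below the threshold.\<close>
lemma outage_prob_upper:
  assumes \<sigma>: "\<And>l. \<sigma>2 l > 0" and Bw: "Bw > 0" and N1: "\<bar>\<tau> R2 - \<tau> R1\<bar> * Bw \<ge> 1"
    and snr: "snr > 0" and \<eta>: "0 < \<eta>" "3 * \<eta> < pi" and R0: "target_rate r \<sigma>2 snr \<ge> 0"
    and T: "T = null_threshold (rho0 snr) (target_rate r \<sigma>2 snr) \<eta>"
  shows "outage_prob r \<sigma>2 Bw \<tau> snr \<le> T ^ 3 *
     ((\<Prod>l\<in>{SD, SR1, SR2}. 4 / (pi * \<sigma>2 l)) + (\<Prod>l\<in>{SD, SR2, R1D}. 4 / (pi * \<sigma>2 l))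
    + (\<Prod>l\<in>{SD, SR1, R2D}. 4 / (pi * \<sigma>2 l)) + (\<Prod>l\<in>{SD, R1D, R2D}. 4 / (pi * \<sigma>2 l)))"
proof -
  interpret prob_space "gain_measure \<sigma>2" using prob_space_gain_measure \<sigma> .
  define S where "S L = {\<alpha>::link \<Rightarrow> complex. \<forall>l\<in>L. \<alpha> l \<in> {z. (cmod z)\<^sup>2 < T}}" for L
  define Out where "Out = {\<alpha> \<in> space (gain_measure \<sigma>2).
      I_RTDA r \<sigma>2 Bw \<tau> snr \<alpha> < target_rate r \<sigma>2 snr}"
  let ?\<mu> = "measure (gain_measure \<sigma>2)"
  have T0: "T \<ge> 0" unfolding T using snr \<eta> R0 by (intro null_threshold_nonneg) (auto simp: rho0_def)
  have disk: "{z::complex. (cmod z)\<^sup>2 < T} \<in> sets borel" by measurable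
  have Ss: "S L \<in> sets (gain_measure \<sigma>2)" for L
    unfolding S_def using disk by (intro gain_cylinder_sets) auto
  have Sle: "?\<mu> (S L) \<le> T ^ 3 * (\<Prod>l\<in>L. 4 / (pi * \<sigma>2 l))" if "card L = 3" for L
  proof -
    have "?\<mu> (S L) \<le> (\<Prod>l\<in>L. 4 * T / (pi * \<sigma>2 l))"
      unfolding S_def using cgauss_disk_upper[OF \<sigma> T0] disk T0 \<sigma>
      by (intro measure_gain_cylinder_le[OF \<sigma>]) (auto intro!: divide_nonneg_pos)
    also have "\<dots> = (\<Prod>l\<in>L. T * (4 / (pi * \<sigma>2 l)))" by (simp add: mult.commute)
    also have "\<dots> = T ^ 3 * (\<Prod>l\<in>L. 4 / (pi * \<sigma>2 l))"
      using that by (simp only: prod.distrib prod_constant)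
    finally show ?thesis .
  qed
  have "Out \<subseteq> S {SD, SR1, SR2} \<union> S {SD, SR2, R1D} \<union> S {SD, SR1, R2D} \<union> S {SD, R1D, R2D}"
  proof
    fix \<alpha> assume "\<alpha> \<in> Out"
    from weak_links_of_outage[OF Bw N1 snr \<eta> _ T] this
    show "\<alpha> \<in> S {SD, SR1, SR2} \<union> S {SD, SR2, R1D} \<union> S {SD, SR1, R2D} \<union> S {SD, R1D, R2D}"
      unfolding S_def Out_def by auto
  qed
  then have "?\<mu> Out \<le> ?\<mu> (S {SD, SR1, SR2} \<union> S {SD, SR2, R1D} \<union> S {SD, SR1, R2D} \<union> S {SD, R1D, R2D})"
    using Ss by (intro finite_measure_mono) auto
  also have "\<dots> \<le> ?\<mu> (S {SD, SR1, SR2}) + ?\<mu> (S {SD, SR2, R1D}) + ?\<mu> (S {SD, SR1, R2D})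
      + ?\<mu> (S {SD, R1D, R2D})"
    using Ss by (intro order.trans[OF measure_subadditive] add_right_mono) auto
  also have "\<dots> \<le> T ^ 3 * (\<Prod>l\<in>{SD, SR1, SR2}. 4 / (pi * \<sigma>2 l))
      + T ^ 3 * (\<Prod>l\<in>{SD, SR2, R1D}. 4 / (pi * \<sigma>2 l))
      + T ^ 3 * (\<Prod>l\<in>{SD, SR1, R2D}. 4 / (pi * \<sigma>2 l))
      + T ^ 3 * (\<Prod>l\<in>{SD, R1D, R2D}. 4 / (pi * \<sigma>2 l))"
    by (intro add_mono Sle) auto
  finally show ?thesis unfolding outage_prob_def Out_def by (simp add: distrib_left)
qed

lemma exp_target_rate:
  assumes "s > 0" "\<sigma>2 SD > 0"
  shows "exp (c * target_rate r \<sigma>2 s) = (1 + s * \<sigma>2 SD) powr (c * r)"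
proof -
  have "1 + s * \<sigma>2 SD > 0" using assms by (simp add: add_pos_pos)
  then show ?thesis by (simp add: target_rate_def powr_def mult.assoc)
qed

text \<open>The square size \<open>e(s) = c0 s^(2r-1)\<close>, with \<open>c0 = 3\<sigma>_SD^(4r)/20\<close>, meets the
  sufficient outage condition once \<open>(s \<sigma>_SD\<^sup>2)^(2r) \<ge> 2\<close>: then
  \<open>5\<rho>e = (s\<sigma>_SD\<^sup>2)^(2r)/2 < (1 + s\<sigma>_SD\<^sup>2)^(2r) - 1 = e^(2R) - 1\<close>.\<close>
lemma small_square_outage_condition:
  assumes \<sigma>: "\<sigma>2 SD > 0" and r: "0 < r" and s0: "s > 0"
    and s1: "2 powr (1 / (2 * r)) \<le> s * \<sigma>2 SD"
  shows "5 * rho0 s * (3 * \<sigma>2 SD powr (2 * r) / 20 * s powr (2 * r - 1))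
    < exp (2 * target_rate r \<sigma>2 s) - 1"
proof -
  define \<sigma> where "\<sigma> = \<sigma>2 SD"
  have \<sigma>0: "\<sigma> > 0" using \<sigma> by (simp add: \<sigma>_def)
  have "(2 powr (1 / (2 * r))) powr (2 * r) \<le> (s * \<sigma>) powr (2 * r)"
    using s1 r by (intro powr_mono2) (auto simp: \<sigma>_def)
  then have two_le: "2 \<le> (s * \<sigma>) powr (2 * r)" using r by (simp add: powr_powr)
  have "s * s powr (2 * r - 1) = s powr (2 * r)"
    using s0 by (simp add: powr_diff powr_minus)
  then have "5 * rho0 s * (3 * \<sigma> powr (2 * r) / 20 * s powr (2 * r - 1))
      = \<sigma> powr (2 * r) * s powr (2 * r) / 2"
    unfolding rho0_def by (simp add: field_simps)
  also have "\<dots> = (s * \<sigma>) powr (2 * r) / 2" using s0 \<sigma>0 by (simp add: powr_mult)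
  also have "\<dots> < (1 + s * \<sigma>) powr (2 * r) - 1"
    using two_le powr_less_mono2[of "2 * r" "s * \<sigma>" "1 + s * \<sigma>"] s0 \<sigma>0 r by simp
  also have "\<dots> = exp (2 * target_rate r \<sigma>2 s) - 1"
    using exp_target_rate[of s \<sigma>2 2 r] s0 \<sigma> by (simp add: \<sigma>_def)
  finally show ?thesis unfolding \<sigma>_def .
qed

lemma outage_prob_lower_power:
  assumes \<sigma>: "\<And>l. \<sigma>2 l > 0" and Bw: "Bw > 0" and r: "0 < r" "r < 1/2"
  shows "\<exists>C>0. eventually (\<lambda>s. C * s powr (3 * (2 * r - 1)) \<le> outage_prob r \<sigma>2 Bw \<tau> s) at_top"
proof -
  define c0 where "c0 = 3 * \<sigma>2 SD powr (2 * r) / 20"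
  have c00: "c0 > 0" using \<sigma>[of SD] by (simp add: c0_def)
  define e where "e s = c0 * s powr (2 * r - 1)" for s
  define K where "K = (\<Prod>l\<in>{SD, R1D, R2D}. 2 * exp (-1) / (pi * \<sigma>2 l))"
  have K0: "K > 0" unfolding K_def using \<sigma> by (intro prod_pos) auto
  have "((\<lambda>s::real. s powr (2 * r - 1)) \<longlongrightarrow> 0) at_top"
    using r by (intro tendsto_neg_powr filterlim_ident) auto
  from tendsto_mult_right_zero[OF this, of c0] have "(e \<longlongrightarrow> 0) at_top"
    unfolding e_def by simp
  then have e_small: "eventually (\<lambda>s. e s < \<sigma>2 l) at_top" for l
    using order_tendstoD(2) \<sigma>[of l] by blast
  have key: "c0 ^ 3 * K * s powr (3 * (2 * r - 1)) \<le> outage_prob r \<sigma>2 Bw \<tau> s"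
    if s0: "s > 0" and s1: "2 powr (1 / (2 * r)) \<le> s * \<sigma>2 SD"
      and es: "\<And>l. l \<in> {SD, R1D, R2D} \<Longrightarrow> e s < \<sigma>2 l" for s
  proof -
    have e0: "e s > 0" using c00 s0 by (simp add: e_def)
    have "5 * rho0 s * e s < exp (2 * target_rate r \<sigma>2 s) - 1"
      unfolding e_def c0_def using small_square_outage_condition[of \<sigma>2 r s, OF \<sigma>[of SD] r(1) s0 s1] .
    then have "e s ^ 3 * K \<le> outage_prob r \<sigma>2 Bw \<tau> s"
      unfolding K_def using es[THEN less_imp_le] s0 by (intro outage_prob_lower[OF \<sigma> Bw _ e0]) auto
    moreover have "e s ^ 3 = c0 ^ 3 * s powr (3 * (2 * r - 1))"
      unfolding e_def using s0
      by (simp add: power_mult_distrib powr_realpow[symmetric] powr_powr mult.commute)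
    ultimately show ?thesis by (simp add: mult_ac)
  qed
  have "eventually (\<lambda>s. c0 ^ 3 * K * s powr (3 * (2 * r - 1)) \<le> outage_prob r \<sigma>2 Bw \<tau> s) at_top"
    using eventually_gt_at_top[of 0] eventually_ge_at_top[of "2 powr (1 / (2 * r)) / \<sigma>2 SD"]
      e_small[of SD] e_small[of R1D] e_small[of R2D]
  proof eventually_elim
    case (elim s)
    then show ?case using \<sigma>[of SD] by (intro key) (auto simp: field_simps)
  qed
  then show ?thesis using c00 K0 by (intro exI[of _ "c0 ^ 3 * K"]) auto
qed

lemma null_threshold_le_power:
  assumes \<sigma>: "\<sigma>2 SD > 0" and s0: "s > 0" and s1: "1 \<le> s * \<sigma>2 SD"
    and \<eta>: "0 < \<eta>" "3 * \<eta> < pi" and r: "0 \<le> r"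
    and \<gamma>: "\<gamma> = 2 / (1 - 3 * \<eta> / pi) * r"
  shows "null_threshold (rho0 s) (target_rate r \<sigma>2 s) \<eta>
    \<le> 3 * (2 * \<sigma>2 SD) powr \<gamma> / (2 * (1 - cos \<eta>)) * s powr (\<gamma> - 1)"
proof -
  define \<sigma> where "\<sigma> = \<sigma>2 SD"
  define \<kappa> where "\<kappa> = 1 - cos \<eta>"
  have \<sigma>0: "\<sigma> > 0" using \<sigma> by (simp add: \<sigma>_def)
  have \<kappa>: "0 < \<kappa>" unfolding \<kappa>_def using one_minus_cos_pos[of \<eta>] \<eta> by simp
  have \<gamma>0: "\<gamma> \<ge> 0" using \<gamma> \<eta> r by simp
  have "exp (2 * target_rate r \<sigma>2 s / (1 - 3 * \<eta> / pi)) = (1 + s * \<sigma>) powr \<gamma>"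
    using exp_target_rate[of s \<sigma>2 "2 / (1 - 3 * \<eta> / pi)" r] s0 \<sigma> \<gamma> by (simp add: \<sigma>_def)
  then have "null_threshold (rho0 s) (target_rate r \<sigma>2 s) \<eta> \<le> (1 + s * \<sigma>) powr \<gamma> / (rho0 s * \<kappa>)"
    unfolding null_threshold_def \<kappa>_def[symmetric] using s0 \<kappa>
    by (simp add: rho0_def divide_right_mono)
  also have "\<dots> \<le> (2 * s * \<sigma>) powr \<gamma> / (rho0 s * \<kappa>)"
    using s0 s1 \<kappa> \<gamma>0 by (intro divide_right_mono powr_mono2) (auto simp: rho0_def \<sigma>_def mult.commute)
  also have "(2 * s * \<sigma>) powr \<gamma> = (2 * \<sigma>) powr \<gamma> * (s * s powr (\<gamma> - 1))"
    using s0 \<sigma>0 by (simp add: powr_mult[symmetric] powr_diff mult_ac)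
  finally show ?thesis unfolding \<sigma>_def[symmetric] \<kappa>_def[symmetric] rho0_def
    using s0 \<kappa> by (simp add: field_simps)
qed

text \<open>For every \<open>\<epsilon> > 0\<close>, the null-window parameter \<open>\<eta>\<close> with
  \<open>2r/(1 - 3\<eta>/\<pi>) = 2r + \<epsilon>/3\<close> gives \<open>P(s) \<le> C s^(3(2r-1) + \<epsilon>)\<close>.\<close>
lemma outage_prob_upper_power:
  assumes \<sigma>: "\<And>l. \<sigma>2 l > 0" and Bw: "Bw > 0" and N1: "\<bar>\<tau> R2 - \<tau> R1\<bar> * Bw \<ge> 1"
    and r: "0 < r" and \<epsilon>: "\<epsilon> > 0"
  shows "\<exists>C>0. eventually (\<lambda>s. outage_prob r \<sigma>2 Bw \<tau> s \<le> C * s powr (3 * (2 * r - 1) + \<epsilon>)) at_top"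
proof -
  define \<theta> where "\<theta> = \<epsilon> / (6 * r + \<epsilon>)"
  define \<eta> where "\<eta> = pi * \<theta> / 3"
  define \<gamma> where "\<gamma> = 2 * r + \<epsilon> / 3"
  have \<theta>: "0 < \<theta>" "\<theta> < 1" using r \<epsilon> by (auto simp: \<theta>_def)
  have \<eta>: "0 < \<eta>" "3 * \<eta> < pi" using \<theta> by (auto simp: \<eta>_def)
  have \<theta>\<eta>: "3 * \<eta> / pi = \<theta>" by (simp add: \<eta>_def)
  have "\<gamma> = 2 / (1 - \<theta>) * r"
    unfolding \<theta>_def \<gamma>_def using r \<epsilon> by (simp add: field_simps)
  then have \<gamma>eq: "\<gamma> = 2 / (1 - 3 * \<eta> / pi) * r" by (simp only: \<theta>\<eta>)
  define c where "c = 3 * (2 * \<sigma>2 SD) powr \<gamma> / (2 * (1 - cos \<eta>))"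
  have c0: "c > 0" using \<sigma>[of SD] one_minus_cos_pos[of \<eta>] \<eta> by (simp add: c_def)
  define C where "C = (\<Prod>l\<in>{SD, SR1, SR2}. 4 / (pi * \<sigma>2 l)) + (\<Prod>l\<in>{SD, SR2, R1D}. 4 / (pi * \<sigma>2 l))
   + (\<Prod>l\<in>{SD, SR1, R2D}. 4 / (pi * \<sigma>2 l)) + (\<Prod>l\<in>{SD, R1D, R2D}. 4 / (pi * \<sigma>2 l))"
  have C0: "C > 0" unfolding C_def using \<sigma> by (intro add_pos_pos prod_pos) auto
  have key: "outage_prob r \<sigma>2 Bw \<tau> s \<le> C * c ^ 3 * s powr (3 * (2 * r - 1) + \<epsilon>)"
    if s0: "s > 0" and s1: "1 \<le> s * \<sigma>2 SD" for s
  proof -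
    define T where "T = null_threshold (rho0 s) (target_rate r \<sigma>2 s) \<eta>"
    have R0: "target_rate r \<sigma>2 s \<ge> 0"
      using s0 \<sigma>[of SD] r by (simp add: target_rate_def)
    have T0: "T \<ge> 0" unfolding T_def using s0 \<eta> R0 by (intro null_threshold_nonneg) (auto simp: rho0_def)
    have Tle: "T \<le> c * s powr (\<gamma> - 1)"
      unfolding T_def c_def using \<sigma>[of SD] s0 s1 \<eta> r \<gamma>eq by (intro null_threshold_le_power) auto
    have "outage_prob r \<sigma>2 Bw \<tau> s \<le> T ^ 3 * C"
      unfolding C_def using outage_prob_upper[OF \<sigma> Bw N1 s0 \<eta> R0 T_def] .
    also have "\<dots> \<le> (c * s powr (\<gamma> - 1)) ^ 3 * C"
      using T0 Tle C0 by (intro mult_right_mono power_mono) auto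
    also have "\<dots> = C * c ^ 3 * s powr (3 * (\<gamma> - 1))"
      using s0 by (simp add: power_mult_distrib powr_realpow[symmetric] powr_powr mult_ac)
    finally show ?thesis by (simp add: \<gamma>_def algebra_simps)
  qed
  have "eventually (\<lambda>s. outage_prob r \<sigma>2 Bw \<tau> s \<le> C * c ^ 3 * s powr (3 * (2 * r - 1) + \<epsilon>)) at_top"
    using eventually_gt_at_top[of 0] eventually_ge_at_top[of "1 / \<sigma>2 SD"]
  proof eventually_elim
    case (elim s)
    then show ?case using \<sigma>[of SD] by (intro key) (auto simp: field_simps)
  qed
  then show ?thesis using C0 c0 by (intro exI[of _ "C * c ^ 3"]) auto
qed

subsection \<open>From power bounds to the decay exponent\<close>

lemma const_div_ln_eventually_small:
  assumes "\<epsilon> > 0"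
  shows "eventually (\<lambda>s::real. \<bar>K / ln s\<bar> \<le> \<epsilon>) at_top"
proof -
  have "((\<lambda>s::real. K / ln s) \<longlongrightarrow> 0) at_top" by real_asymp
  then have "eventually (\<lambda>s::real. dist (K / ln s) 0 < \<epsilon>) at_top"
    using assms by (rule tendstoD)
  then show ?thesis by eventually_elim (simp add: dist_real_def)
qed

lemma decay_exponent_upper:
  fixes P :: "real \<Rightarrow> real"
  assumes C: "C > 0" and ev: "eventually (\<lambda>s. C * s powr a \<le> P s) at_top" and e: "\<epsilon> > 0"
  shows "eventually (\<lambda>s. - ln (P s) / ln s \<le> - a + \<epsilon>) at_top"
  using ev const_div_ln_eventually_small[OF e, of "ln C"] eventually_gt_at_top[of 1]
proof eventually_elim
  case (elim s)
  have s0: "s > 0" "ln s > 0" using elim by auto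
  have pos: "C * s powr a > 0" using C s0 by simp
  have "ln (C * s powr a) \<le> ln (P s)" using elim pos by (subst ln_le_cancel_iff) auto
  then have "- ln (P s) \<le> (- a) * ln s - ln C" using C s0 by (simp add: ln_mult ln_powr)
  then have "- ln (P s) / ln s \<le> ((- a) * ln s - ln C) / ln s"
    by (rule divide_right_mono) (use s0 in auto)
  also have "\<dots> = - a - ln C / ln s" using s0 by (simp add: field_simps)
  also have "\<dots> \<le> - a + \<epsilon>" using elim(2) unfolding abs_le_iff by linarith
  finally show ?case .
qed

lemma decay_exponent_lower:
  fixes P :: "real \<Rightarrow> real"
  assumes C: "C > 0" and ev: "eventually (\<lambda>s. 0 < P s \<and> P s \<le> C * s powr b) at_top"
    and e: "\<epsilon> > 0"
  shows "eventually (\<lambda>s. - b - \<epsilon> \<le> - ln (P s) / ln s) at_top"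
  using ev const_div_ln_eventually_small[OF e, of "ln C"] eventually_gt_at_top[of 1]
proof eventually_elim
  case (elim s)
  have s0: "s > 0" "ln s > 0" using elim by auto
  have "ln (P s) \<le> ln (C * s powr b)" using elim C s0 by (subst ln_le_cancel_iff) auto
  then have "(- b) * ln s - ln C \<le> - ln (P s)" using C s0 by (simp add: ln_mult ln_powr)
  then have "((- b) * ln s - ln C) / ln s \<le> - ln (P s) / ln s"
    by (rule divide_right_mono) (use s0 in auto)
  moreover have "((- b) * ln s - ln C) / ln s = - b - ln C / ln s"
    using s0 by (simp add: field_simps)
  moreover have "- b - \<epsilon> \<le> - b - ln C / ln s" using elim(2) unfolding abs_le_iff by linarith
  ultimately show ?case by linarith
qed

lemma decay_exponent_tendsto:
  fixes P :: "real \<Rightarrow> real"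
  assumes C: "C > 0" and lower: "eventually (\<lambda>s. C * s powr a \<le> P s) at_top"
    and upper: "\<And>\<epsilon>. \<epsilon> > 0 \<Longrightarrow> \<exists>C'>0. eventually (\<lambda>s. P s \<le> C' * s powr (a + \<epsilon>)) at_top"
  shows "((\<lambda>s. - ln (P s) / ln s) \<longlongrightarrow> - a) at_top"
proof (rule tendstoI)
  fix \<epsilon> :: real assume \<epsilon>: "\<epsilon> > 0"
  have pos: "eventually (\<lambda>s. 0 < P s) at_top"
    using lower eventually_gt_at_top[of 0]
  proof eventually_elim
    case (elim s)
    have "0 < C * s powr a" using C elim(2) by simp
    then show ?case using elim(1) by linarith
  qed
  obtain C' where C': "C' > 0" and up: "eventually (\<lambda>s. P s \<le> C' * s powr (a + \<epsilon> / 4)) at_top"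
    using upper[of "\<epsilon> / 4"] \<epsilon> by auto
  have "eventually (\<lambda>s. 0 < P s \<and> P s \<le> C' * s powr (a + \<epsilon> / 4)) at_top"
    using pos up by (rule eventually_conj)
  then have above: "eventually (\<lambda>s. - (a + \<epsilon> / 4) - \<epsilon> / 4 \<le> - ln (P s) / ln s) at_top"
    by (rule decay_exponent_lower[OF C']) (use \<epsilon> in simp)
  have below: "eventually (\<lambda>s. - ln (P s) / ln s \<le> - a + \<epsilon> / 2) at_top"
    using \<epsilon> by (intro decay_exponent_upper[OF C lower]) simp
  from above below show "eventually (\<lambda>s. dist (- ln (P s) / ln s) (- a) < \<epsilon>) at_top"
  proof eventually_elim
    case (elim s)
    then show ?case using \<epsilon> unfolding dist_real_def abs_less_iff by linarith
  qed
qed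

lemma outage_decay_exponent:
  assumes \<sigma>: "\<And>l. \<sigma>2 l > 0" and Bw: "Bw > 0" and N1: "\<bar>\<tau> R2 - \<tau> R1\<bar> * Bw \<ge> 1"
    and r: "0 < r" "r < 1/2"
  shows "((\<lambda>s. - ln (outage_prob r \<sigma>2 Bw \<tau> s) / ln s) \<longlongrightarrow> 3 - 6 * r) at_top"
proof -
  obtain C where C: "C > 0"
    and lower: "eventually (\<lambda>s. C * s powr (3 * (2 * r - 1)) \<le> outage_prob r \<sigma>2 Bw \<tau> s) at_top"
    using outage_prob_lower_power[of \<sigma>2 Bw r \<tau>, OF \<sigma> Bw r] by blast
  have "3 - 6 * r = - (3 * (2 * r - 1))" by simp
  then show ?thesis
    using decay_exponent_tendsto[OF C lower
        outage_prob_upper_power[of \<sigma>2 Bw \<tau> r, OF \<sigma> Bw N1 r(1)]] by (simp only:)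
qed

lemma floor_div_ceiling_range:
  fixes x :: real
  assumes "x \<ge> 1"
  shows "real_of_int \<lfloor>x\<rfloor> / real_of_int \<lceil>x\<rceil> \<in> {1/2 .. 1}"
proof -
  have f1: "real_of_int \<lfloor>x\<rfloor> \<ge> 1" using assms by (simp add: le_floor_iff)
  have "\<lceil>x\<rceil> \<le> \<lfloor>x\<rfloor> + 1" by (simp add: ceiling_le_iff)
  then have c: "real_of_int \<lceil>x\<rceil> \<le> real_of_int \<lfloor>x\<rfloor> + 1" by linarith
  have fc: "real_of_int \<lfloor>x\<rfloor> \<le> real_of_int \<lceil>x\<rceil>" by (simp add: floor_le_ceiling)
  have cpos: "real_of_int \<lceil>x\<rceil> > 0" using f1 fc by linarith
  have "real_of_int \<lceil>x\<rceil> \<le> 2 * real_of_int \<lfloor>x\<rfloor>" using f1 c by linarith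
  then have "1/2 \<le> real_of_int \<lfloor>x\<rfloor> / real_of_int \<lceil>x\<rceil>"
    using cpos by (simp add: field_simps)
  moreover have "real_of_int \<lfloor>x\<rfloor> / real_of_int \<lceil>x\<rceil> \<le> 1"
    using fc cpos by (simp add: field_simps)
  ultimately show ?thesis by simp
qed

theorem theorem4:
  fixes r Bw :: real and \<sigma>2 :: "link \<Rightarrow> real" and \<tau> :: "relay \<Rightarrow> real"
  assumes "0 < r" and "r < 1 / 2"
    and "\<forall>l. 0 < \<sigma>2 l"
    and "0 < Bw"
    and "\<bar>\<tau> R2 - \<tau> R1\<bar> * Bw \<ge> 1"
  shows "(let T0 = \<bar>\<tau> R2 - \<tau> R1\<bar>;
              \<Delta>1 = real_of_int \<lfloor>T0 * Bw\<rfloor> / real_of_int \<lceil>T0 * Bw\<rceil>;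
              d = (\<lambda>snr. - ln (outage_prob r \<sigma>2 Bw \<tau> snr) / ln snr)
          in \<Delta>1 \<in> {1/2 .. 1}
             \<and> ereal (3 - 6 * r / \<Delta>1) \<le> Liminf at_top (\<lambda>snr. ereal (d snr))
             \<and> Liminf at_top (\<lambda>snr. ereal (d snr)) \<le> Limsup at_top (\<lambda>snr. ereal (d snr))
             \<and> Limsup at_top (\<lambda>snr. ereal (d snr)) \<le> ereal (3 - 6 * r)
             \<and> (T0 * Bw \<in> \<int> \<longrightarrow> (d \<longlongrightarrow> 3 - 6 * r) at_top))"
proof -
  define d where "d = (\<lambda>snr. - ln (outage_prob r \<sigma>2 Bw \<tau> snr) / ln snr)"
  define x where "x = \<bar>\<tau> R2 - \<tau> R1\<bar> * Bw"
  define \<Delta> where "\<Delta> = real_of_int \<lfloor>x\<rfloor> / real_of_int \<lceil>x\<rceil>"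
  have lim: "(d \<longlongrightarrow> 3 - 6 * r) at_top"
    unfolding d_def x_def using assms by (intro outage_decay_exponent) auto
  then have limE: "((\<lambda>s. ereal (d s)) \<longlongrightarrow> ereal (3 - 6 * r)) at_top" by (rule tendsto_ereal)
  have Li: "Liminf at_top (\<lambda>s. ereal (d s)) = ereal (3 - 6 * r)"
    by (rule lim_imp_Liminf[OF _ limE]) simp
  have Ls: "Limsup at_top (\<lambda>s. ereal (d s)) = ereal (3 - 6 * r)"
    by (rule lim_imp_Limsup[OF _ limE]) simp
  have \<Delta>: "\<Delta> \<in> {1/2 .. 1}" unfolding \<Delta>_def x_def using assms(5) by (rule floor_div_ceiling_range)
  then have "6 * r \<le> 6 * r / \<Delta>" using assms(1) by (simp add: le_divide_eq)
  then have main: "\<Delta> \<in> {1/2 .. 1} \<and> ereal (3 - 6 * r / \<Delta>) \<le> Liminf at_top (\<lambda>snr. ereal (d snr))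
      \<and> Liminf at_top (\<lambda>snr. ereal (d snr)) \<le> Limsup at_top (\<lambda>snr. ereal (d snr))
      \<and> Limsup at_top (\<lambda>snr. ereal (d snr)) \<le> ereal (3 - 6 * r)
      \<and> (x \<in> \<int> \<longrightarrow> (d \<longlongrightarrow> 3 - 6 * r) at_top)"
    unfolding Li Ls using \<Delta> lim by simp
  show ?thesis using main unfolding Let_def d_def \<Delta>_def x_def .
qed

end
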